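(* Suppose Assumptions (A1)–(A3) hold and let $\{\boldsymbol x_k\},\{\boldsymbol v_k\}$ be generated by Algorithm 1 with parameters $\alpha>\beta>0$ and $\eta>0$. Define $\epsilon_1=(\alpha-\beta)\rho_2(L)-\frac12(2+3L_f^2)$, $\epsilon_2=\beta^2\rho(L)+(2\alpha^2+\beta^2)\rho^2(L)+\frac52L_f^2$, $\epsilon_3=\beta-\frac12-\frac\alpha{2\beta^2}-\frac1{2\beta\rho_2(L)}$, $\epsilon_4=2\beta^2+\frac12$, $\epsilon_5=\frac14-\frac1{2\beta}(\frac1\beta+\frac1{\rho_2(L)}+\frac\alpha\beta)L_f^2$, $\epsilon_6=\frac1{\beta^2}(1+\frac1{\rho_2(L)}+\frac\alpha\beta)L_f^2+\frac{L_f(1+L_f)}2$, and $$V_k=\frac12\|\boldsymbol x_k\|^2_{\boldsymbol K}+\frac12\Big\|\boldsymbol v_k+\frac1\beta\boldsymbol g^0_k\Big\|^2_{\boldsymbol Q+\frac\alpha\beta\boldsymbol K}+\boldsymbol x_k^\top\boldsymbol K\Big(\boldsymbol v_k+\frac1\beta\boldsymbol g^0_k\Big)+n(f(\bar x_k)-f^* ).$$ Then for all $k\in\mathbb N_0$, $$V_{k+1}\le V_k-\eta(\epsilon_1-\eta\epsilon_2)\|\boldsymbol x_k\|^2_{\boldsymbol K}-\eta(\epsilon_3-\eta\epsilon_4)\Big\|\boldsymbol v_k+\frac1\beta\boldsymbol g_k^0\Big\|^2_{\boldsymbol K}-\eta(\epsilon_5-\eta\epsilon_6)\|\bar{\boldsymbol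 g}_k\|^2-\frac\eta4\|\bar{\boldsymbol g}^0_k\|^2.$$
   Context: Setting: $n$ agents on weighted undirected graph $\mathcal G$ with Laplacian $L=(L_{ij})$; $\rho(L)$ largest and $\rho_2(L)$ smallest positive eigenvalue of $L$. $f=\frac1n\sum_if_i$, $f_i:\mathbb R^p\to\mathbb R$, $f^*=\min f$. Assumptions: (A1) $\mathcal G$ connected; (A2) $\arg\min f\ne\emptyset$, $f^*>-\infty$; (A3) each $\nabla f_i$ is $L_f$-Lipschitz. Algorithm 1: $x_{i,0}$ arbitrary, $\sum_jv_{j,0}=\mathbf 0_p$, $x_{i,k+1}=x_{i,k}-\eta(\alpha\sum_jL_{ij}x_{j,k}+\beta v_{i,k}+\nabla f_i(x_{i,k}))$, $v_{i,k+1}=v_{i,k}+\eta\beta\sum_jL_{ij}x_{j,k}$. Notation: $\boldsymbol x_k=\mathrm{col}(x_{i,k})$, $\boldsymbol v_k=\mathrm{col}(v_{i,k})$, $\bar x_k=\frac1n\sum_ix_{i,k}$, $\boldsymbol K=(I_n-\frac1n\mathbf 1\mathbf 1^\top)\otimes I_p$, $\boldsymbol H=\frac1n\mathbf 1\mathbf 1^\top\otimes I_p$, $\|z\|^2_M=z^\top Mz$, $\boldsymbol g_k=\mathrm{col}(\nabla f_i(x_{i,k}))$, $\bar{\boldsymbol g}_k=\boldsymbol H\boldsymbol g_k$, $\boldsymbol g_k^0=\mathrm{col}(\nabla f_i(\bar x_k))$, $\bar{\boldsymbol g}^0_k=\boldsymbol H\boldsymbol g^0_k$. $\boldsymbol Q=R\Lambda_1^{-1}R^\top\otimes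 I_p$, where $[\frac1{\sqrt n}\mathbf 1_n\ R]$ is an orthogonal matrix whose columns of $R$ are orthonormal eigenvectors of $L$ for its nonzero eigenvalues $0<\lambda_2\le\dots\le\lambda_n$ and $\Lambda_1=\mathrm{diag}(\lambda_2,\dots,\lambda_n)$ (so $R\Lambda_1^{-1}R^\top$ is the Moore–Penrose pseudoinverse of $L$). *)

theory Defs
  imports "HOL-Analysis.Analysis"
begin

text \<open>Agents are indexed by a finite type 'n (n = CARD('n)), decision variables live in
  real^'p.  A stacked vector col(z_i) in R^(np) is represented as z :: (real^'p)^'n
  with block z$i.  For an n x n matrix M, the Kronecker product M (x) I_p acts blockwise.\<close>

definition weighted_graph :: "real^'n^'n \<Rightarrow> bool" where
  "weighted_graph W \<longleftrightarrow> (\<forall>i j. W$i$j = W$j$i) \<and> (\<forall>i j. 0 \<le> W$i$j) \<and> (\<forall>i. W$i$i = 0)"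

definition graph_connected :: "real^'n^'n \<Rightarrow> bool" where
  "graph_connected W \<longleftrightarrow> (\<forall>i j. (i, j) \<in> {(a, b). 0 < W$a$b}\<^sup>*)"

definition lap :: "real^'n^'n \<Rightarrow> real^'n^'n" where
  "lap W = (\<chi> i j. if i = j then (\<Sum>k\<in>UNIV - {i}. W$i$k) else - W$i$j)"

definition is_eigenvalue :: "real^'n^'n \<Rightarrow> real \<Rightarrow> bool" where
  "is_eigenvalue A c \<longleftrightarrow> (\<exists>v. v \<noteq> 0 \<and> A *v v = c *\<^sub>R v)"

definition rho :: "real^'n^'n \<Rightarrow> real" where
  "rho A = Max {c. is_eigenvalue A c}"

definition rho2 :: "real^'n^'n \<Rightarrow> real" where
  "rho2 A = Min {c. 0 < c \<and> is_eigenvalue A c}"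

definition pinv :: "real^'n^'n \<Rightarrow> real^'n^'n" where
  "pinv A = (THE M. A ** M ** A = A \<and> M ** A ** M = M \<and>
                    transpose (A ** M) = A ** M \<and> transpose (M ** A) = M ** A)"

definition ones_mat :: "real^'n^'n" where
  "ones_mat = (\<chi> i j. 1)"

definition Kmat :: "real^'n^'n" where
  "Kmat = mat 1 - (1 / real CARD('n)) *\<^sub>R ones_mat"

definition Hmat :: "real^'n^'n" where
  "Hmat = (1 / real CARD('n)) *\<^sub>R ones_mat"

definition kmult :: "real^'n^'n \<Rightarrow> (real^'p)^'n \<Rightarrow> (real^'p)^'n" where
  "kmult M z = (\<chi> i. \<Sum>j\<in>UNIV. M$i$j *\<^sub>R z$j)"

definition kinner :: "(real^'p)^'n \<Rightarrow> real^'n^'n \<Rightarrow> (real^'p)^'n \<Rightarrow> real" where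
  "kinner y M z = y \<bullet> kmult M z"

definition wnorm2 :: "real^'n^'n \<Rightarrow> (real^'p)^'n \<Rightarrow> real" where
  "wnorm2 M z = kinner z M z"

definition avgf :: "('n \<Rightarrow> real^'p \<Rightarrow> real) \<Rightarrow> real^'p \<Rightarrow> real" where
  "avgf f y = (1 / real CARD('n)) * (\<Sum>i\<in>UNIV. f i y)"

definition fstar :: "('n \<Rightarrow> real^'p \<Rightarrow> real) \<Rightarrow> real" where
  "fstar f = (INF y. avgf f y)"

definition xbar :: "(real^'p)^'n \<Rightarrow> real^'p" where
  "xbar z = (1 / real CARD('n)) *\<^sub>R (\<Sum>i\<in>UNIV. z$i)"

definition gcol :: "('n \<Rightarrow> real^'p \<Rightarrow> real^'p) \<Rightarrow> (real^'p)^'n \<Rightarrow> (real^'p)^'n" where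
  "gcol grad z = (\<chi> i. grad i (z$i))"

definition g0col :: "('n \<Rightarrow> real^'p \<Rightarrow> real^'p) \<Rightarrow> (real^'p)^'n \<Rightarrow> (real^'p)^'n" where
  "g0col grad z = (\<chi> i. grad i (xbar z))"

definition eps1 :: "real^'n^'n \<Rightarrow> real \<Rightarrow> real \<Rightarrow> real \<Rightarrow> real" where
  "eps1 L \<alpha> \<beta> Lf = (\<alpha> - \<beta>) * rho2 L - (2 + 3 * Lf^2) / 2"

definition eps2 :: "real^'n^'n \<Rightarrow> real \<Rightarrow> real \<Rightarrow> real \<Rightarrow> real" where
  "eps2 L \<alpha> \<beta> Lf = \<beta>^2 * rho L + (2 * \<alpha>^2 + \<beta>^2) * (rho L)^2 + 5 / 2 * Lf^2"

definition eps3 :: "real^'n^'n \<Rightarrow> real \<Rightarrow> real \<Rightarrow> real" where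
  "eps3 L \<alpha> \<beta> = \<beta> - 1/2 - \<alpha> / (2 * \<beta>^2) - 1 / (2 * \<beta> * rho2 L)"

definition eps4 :: "real \<Rightarrow> real" where
  "eps4 \<beta> = 2 * \<beta>^2 + 1/2"

definition eps5 :: "real^'n^'n \<Rightarrow> real \<Rightarrow> real \<Rightarrow> real \<Rightarrow> real" where
  "eps5 L \<alpha> \<beta> Lf = 1/4 - 1 / (2 * \<beta>) * (1/\<beta> + 1 / rho2 L + \<alpha>/\<beta>) * Lf^2"

definition eps6 :: "real^'n^'n \<Rightarrow> real \<Rightarrow> real \<Rightarrow> real \<Rightarrow> real" where
  "eps6 L \<alpha> \<beta> Lf = 1 / \<beta>^2 * (1 + 1 / rho2 L + \<alpha>/\<beta>) * Lf^2 + Lf * (1 + Lf) / 2"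

definition lyapV :: "real^'n^'n \<Rightarrow> ('n \<Rightarrow> real^'p \<Rightarrow> real) \<Rightarrow> ('n \<Rightarrow> real^'p \<Rightarrow> real^'p)
    \<Rightarrow> real \<Rightarrow> real \<Rightarrow> (real^'p)^'n \<Rightarrow> (real^'p)^'n \<Rightarrow> real" where
  "lyapV L f grad \<alpha> \<beta> z w =
     (let u = w + (1/\<beta>) *\<^sub>R g0col grad z in
        1/2 * wnorm2 Kmat z + 1/2 * wnorm2 (pinv L + (\<alpha>/\<beta>) *\<^sub>R Kmat) u
        + kinner z Kmat u + real CARD('n) * (avgf f (xbar z) - fstar f))"

end

theory Submission
  imports Defs
begin

text \<open>Write u = v + g0/\<beta> for the shifted dual variable. Since the mean of v stays zero,
  the mean of x moves by -\<eta> times the averaged gradient. The increment of V is expanded exactly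
  into inner products of Kx, Ku, Lx, the disagreement g - g0 and the change g0' - g0 of the
  gradients at the mean; the terms of first order in \<eta> combine into
  -\<eta>(\<alpha> - \<beta>) x^T L x - \<eta>\<beta> |Ku|^2 plus cross terms. Every remaining term is bounded by Young's
  inequality together with the spectral bounds \<rho>2 |Kz|^2 \<le> z^T L z \<le> \<rho> |Kz|^2,
  |Lz|^2 \<le> \<rho>^2 |Kz|^2 and \<rho>2 |L^+ z| \<le> |Kz|, the Lipschitz bounds |g - g0|^2 \<le> Lf^2 |Kx|^2
  and |g0' - g0|^2 \<le> Lf^2 \<eta>^2 |Hg|^2, and the descent lemma for f at the mean. The constants
  \<epsilon>1, ..., \<epsilon>6 dominate the collected coefficients.\<close>

lemma matrix_add_rdistrib: "(A + B) ** C = A ** C + B ** (C::real^'n^'m)"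
  by (simp add: matrix_matrix_mult_def vec_eq_iff sum.distrib algebra_simps)

lemma matrix_diff_rdistrib: "(A - B) ** C = A ** C - B ** (C::real^'n^'m)"
  by (simp add: matrix_matrix_mult_def vec_eq_iff sum_subtractf algebra_simps)

lemma matrix_diff_ldistrib: "A ** (B - C) = A ** B - A ** (C::real^'n^'m)"
  by (simp add: matrix_matrix_mult_def vec_eq_iff sum_subtractf algebra_simps)

lemma transpose_add: "transpose (A + B) = transpose A + transpose (B::real^'n^'m)"
  by (simp add: transpose_def vec_eq_iff)

lemma transpose_diff: "transpose (A - B) = transpose A - transpose (B::real^'n^'m)"
  by (simp add: transpose_def vec_eq_iff)

lemma symmetric_inner_mult_vector:
  fixes M :: "real^'n^'n"
  assumes "transpose M = M"
  shows "y \<bullet> (M *v z) = (M *v y) \<bullet> z"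
  by (metis assms dot_lmul_matrix transpose_matrix_vector)

lemma symmetric_idempotent_quadratic_form:
  fixes P :: "real^'n^'n"
  assumes "transpose P = P" and "P ** P = P"
  shows "z \<bullet> (P *v z) = (P *v z) \<bullet> (P *v z)"
  using symmetric_inner_mult_vector[OF assms(1), of z "P *v z"]
  by (simp add: matrix_vector_mul_assoc assms(2))

lemma penrose_unique:
  fixes A Y Z :: "real^'n^'n"
  assumes Y: "A ** Y ** A = A" "Y ** A ** Y = Y" "transpose (A ** Y) = A ** Y" "transpose (Y ** A) = Y ** A"
    and Z: "A ** Z ** A = A" "Z ** A ** Z = Z" "transpose (A ** Z) = A ** Z" "transpose (Z ** A) = Z ** A"
  shows "Y = Z"
proof -
  have "A ** Y = (A ** Z) ** (A ** Y)"
    using Z(1) by (simp add: matrix_mul_assoc)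
  also have "\<dots> = transpose (A ** Z) ** transpose (A ** Y)"
    using Y(3) Z(3) by simp
  also have "\<dots> = transpose (A ** Y ** A ** Z)"
    by (simp add: matrix_transpose_mul matrix_mul_assoc)
  also have "\<dots> = A ** Z"
    using Y(1) Z(3) by simp
  finally have AY: "A ** Y = A ** Z" .
  have "Y ** A = Y ** (A ** Z ** A)"
    using Z(1) by simp
  also have "\<dots> = (Y ** A) ** (Z ** A)"
    by (simp add: matrix_mul_assoc)
  also have "\<dots> = transpose (Y ** A) ** transpose (Z ** A)"
    using Y(4) Z(4) by simp
  also have "\<dots> = transpose (Z ** (A ** Y ** A))"
    by (simp add: matrix_transpose_mul matrix_mul_assoc)
  also have "\<dots> = Z ** A"
    using Y(1) Z(4) by simp
  finally have YA: "Y ** A = Z ** A" .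
  have "Y = Y ** (A ** Y)"
    using Y(2) by (simp add: matrix_mul_assoc)
  also have "\<dots> = Z ** A ** Z"
    using AY YA by (simp add: matrix_mul_assoc)
  finally show ?thesis
    using Z(2) by simp
qed

lemma pinv_eqI:
  fixes A M :: "real^'n^'n"
  assumes "A ** M ** A = A" "M ** A ** M = M" "transpose (A ** M) = A ** M" "transpose (M ** A) = M ** A"
  shows "pinv A = M"
  unfolding pinv_def
proof (rule the_equality)
  fix Z
  assume "A ** Z ** A = A \<and> Z ** A ** Z = Z \<and> transpose (A ** Z) = A ** Z \<and> transpose (Z ** A) = Z ** A"
  then show "Z = M"
    using penrose_unique[OF _ _ _ _ assms] by blast
qed (use assms in blast)

section \<open>Symmetric positive semidefinite matrices\<close>

lemma psd_mult_vector_eq_0: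
  fixes M :: "real^'n^'n"
  assumes sym: "transpose M = M" and psd: "\<And>y. 0 \<le> y \<bullet> (M *v y)"
    and zero: "z \<bullet> (M *v z) = 0"
  shows "M *v z = 0"
proof (rule ccontr)
  assume "M *v z \<noteq> 0"
  define w where "w = M *v z"
  define q where "q = w \<bullet> (M *v w)"
  define s where "s = (w \<bullet> w) / (q + 1)"
  have q: "0 \<le> q" using psd by (simp add: q_def)
  have w: "0 < w \<bullet> w" using \<open>M *v z \<noteq> 0\<close> by (simp add: w_def)
  have s: "0 < s" using w q by (simp add: s_def)
  have "z \<bullet> (M *v w) = w \<bullet> w"
    using symmetric_inner_mult_vector[OF sym, of z w] by (simp add: w_def)
  then have "(z - s *\<^sub>R w) \<bullet> (M *v (z - s *\<^sub>R w)) = - 2 * s * (w \<bullet> w) + s^2 * q"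
    using zero by (simp add: matrix_vector_mult_diff_distrib matrix_vector_mult_scaleR inner_diff_left inner_diff_right q_def w_def
        power2_eq_square algebra_simps inner_commute)
  then have "2 * (w \<bullet> w) \<le> s * q"
    using psd[of "z - s *\<^sub>R w"] s by (simp add: power2_eq_square)
  also have "s * q < w \<bullet> w"
    using q w by (simp add: s_def field_simps)
  finally show False using w by simp
qed

lemma psd_cauchy_schwarz:
  fixes M :: "real^'n^'n"
  assumes sym: "transpose M = M" and psd: "\<And>y. 0 \<le> y \<bullet> (M *v y)"
  shows "(y \<bullet> (M *v z))^2 \<le> (y \<bullet> (M *v y)) * (z \<bullet> (M *v z))"
proof (cases "z \<bullet> (M *v z) = 0")
  case True
  then show ?thesis using psd_mult_vector_eq_0[OF sym psd True] True by simp
next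
  case False
  define c where "c = z \<bullet> (M *v z)"
  define t where "t = (y \<bullet> (M *v z)) / c"
  have c: "0 < c" using False psd[of z] by (simp add: c_def)
  have "z \<bullet> (M *v y) = y \<bullet> (M *v z)"
    using symmetric_inner_mult_vector[OF sym, of z y] by (simp add: inner_commute)
  then have "(y - t *\<^sub>R z) \<bullet> (M *v (y - t *\<^sub>R z)) = y \<bullet> (M *v y) - (y \<bullet> (M *v z))^2 / c"
    using c by (simp add: matrix_vector_mult_diff_distrib matrix_vector_mult_scaleR inner_diff_left inner_diff_right c_def t_def
        power2_eq_square field_simps)
  then have "(y \<bullet> (M *v z))^2 / c \<le> y \<bullet> (M *v y)"
    using psd[of "y - t *\<^sub>R z"] by simp
  then show ?thesis using c by (simp add: c_def[symmetric] field_simps)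
qed

text \<open>Eigenvectors for distinct eigenvalues are orthogonal, hence independent.\<close>

lemma finite_eigenvalues_symmetric:
  fixes A :: "real^'n^'n"
  assumes sym: "transpose A = A"
  shows "finite {c. is_eigenvalue A c}"
proof -
  define E where "E = {c. is_eigenvalue A c}"
  define ev where "ev c = (SOME v. v \<noteq> 0 \<and> A *v v = c *\<^sub>R v)" for c
  have ev: "ev c \<noteq> 0 \<and> A *v ev c = c *\<^sub>R ev c" if "c \<in> E" for c
  proof -
    have "\<exists>v. v \<noteq> 0 \<and> A *v v = c *\<^sub>R v" using that by (simp add: E_def is_eigenvalue_def)
    then show ?thesis unfolding ev_def by (rule someI_ex)
  qed
  have "ev c \<bullet> ev d = 0" if "c \<in> E" "d \<in> E" "c \<noteq> d" for c d
  proof -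
    have "ev c \<bullet> (A *v ev d) = (A *v ev c) \<bullet> ev d"
      by (rule symmetric_inner_mult_vector[OF sym])
    then have "d * (ev c \<bullet> ev d) = c * (ev c \<bullet> ev d)"
      using ev[OF that(1)] ev[OF that(2)] by simp
    then show ?thesis using that(3) by simp
  qed
  then have "pairwise orthogonal (ev ` E)"
    unfolding pairwise_def orthogonal_def by auto
  moreover have "0 \<notin> ev ` E" using ev by auto
  ultimately have "finite (ev ` E)"
    using pairwise_orthogonal_independent independent_bound by blast
  moreover have "inj_on ev E"
  proof (rule inj_onI)
    fix c d assume "c \<in> E" "d \<in> E" "ev c = ev d"
    then have "c *\<^sub>R ev c = d *\<^sub>R ev c" using ev by metis
    then show "c = d" using ev[OF \<open>c \<in> E\<close>] by simp
  qed
  ultimately show ?thesis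
    using finite_imageD unfolding E_def by blast
qed

lemma quadratic_form_normalize:
  fixes z :: "real^'n"
  assumes "z \<noteq> 0"
  shows "z \<bullet> (A *v z) = (norm z)^2 * ((z /\<^sub>R norm z) \<bullet> (A *v (z /\<^sub>R norm z)))"
  using assms
  by (simp add: matrix_vector_mult_scaleR power2_eq_square)
    (simp add: field_simps)

text \<open>An eigenvalue is read off from a vector at which the Rayleigh quotient is extremal:
  the shifted matrix is semidefinite and its form vanishes there.\<close>

lemma symmetric_max_eigenvalue_bound:
  fixes A :: "real^'n^'n"
  assumes sym: "transpose A = A"
  shows "\<exists>l. is_eigenvalue A l \<and> (\<forall>z. z \<bullet> (A *v z) \<le> l * (z \<bullet> z))"
proof -
  have "\<exists>x\<in>sphere 0 1. \<forall>y\<in>sphere 0 1. y \<bullet> (A *v y) \<le> x \<bullet> (A *v x)"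
    by (rule continuous_attains_sup) (auto intro!: continuous_intros)
  then obtain x where x: "norm x = 1"
    and xmax: "\<And>y. norm y = 1 \<Longrightarrow> y \<bullet> (A *v y) \<le> x \<bullet> (A *v x)"
    by auto
  define l where "l = x \<bullet> (A *v x)"
  have bound: "z \<bullet> (A *v z) \<le> l * (z \<bullet> z)" for z
  proof (cases "z = 0")
    case False
    have "(norm z)^2 * ((z /\<^sub>R norm z) \<bullet> (A *v (z /\<^sub>R norm z))) \<le> (norm z)^2 * l"
      using xmax[of "z /\<^sub>R norm z"] False by (simp add: l_def mult_left_mono)
    then show ?thesis
      using quadratic_form_normalize[OF False, of A] by (simp add: power2_norm_eq_inner mult.commute)
  qed simp
  define M where "M = l *\<^sub>R mat 1 - A"
  have Mv: "M *v y = l *\<^sub>R y - A *v y" for y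
    by (simp add: M_def matrix_vector_mult_diff_rdistrib scaleR_matrix_vector_assoc[symmetric])
  have "transpose M = M"
    using sym by (simp add: M_def transpose_def vec_eq_iff mat_def)
  moreover have "0 \<le> y \<bullet> (M *v y)" for y
    using bound[of y] by (simp add: Mv inner_diff_right)
  moreover have "x \<bullet> (M *v x) = 0"
    using x by (simp add: Mv inner_diff_right l_def power2_norm_eq_inner[symmetric])
  ultimately have "M *v x = 0"
    by (rule psd_mult_vector_eq_0)
  then have "A *v x = l *\<^sub>R x"
    by (simp add: Mv)
  then have "is_eigenvalue A l"
    using x unfolding is_eigenvalue_def by (metis norm_zero zero_neq_one)
  then show ?thesis using bound by blast
qed

lemma Kmat_eq: "Kmat = mat 1 - Hmat"
  by (simp add: Kmat_def Hmat_def)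

lemma Hmat_mult_vector: "(Hmat::real^'n^'n) *v z = (\<chi> i. (\<Sum>j\<in>UNIV. z$j) / real CARD('n))"
  by (simp add: Hmat_def ones_mat_def matrix_vector_mult_def vec_eq_iff sum_divide_distrib)

lemma Hmat_idem [simp]: "(Hmat::real^'n^'n) ** Hmat = Hmat"
  by (simp add: matrix_eq matrix_vector_mul_assoc[symmetric] Hmat_mult_vector)

lemma Kmat_mult_vector: "(Kmat::real^'n^'n) *v z = z - Hmat *v z"
  by (simp add: Kmat_eq matrix_vector_mult_diff_rdistrib)

lemma Kmat_Hmat [simp]: "(Kmat::real^'n^'n) ** Hmat = 0"
  by (simp add: matrix_eq matrix_vector_mul_assoc[symmetric] Kmat_mult_vector Hmat_mult_vector)

lemma Hmat_Kmat [simp]: "(Hmat::real^'n^'n) ** Kmat = 0"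
  by (simp add: matrix_eq matrix_vector_mul_assoc[symmetric] Kmat_mult_vector
      matrix_vector_mult_diff_distrib Hmat_mult_vector)

lemma Kmat_idem [simp]: "(Kmat::real^'n^'n) ** Kmat = Kmat"
  by (simp add: matrix_eq matrix_vector_mul_assoc[symmetric] Kmat_mult_vector
      matrix_vector_mult_diff_distrib Hmat_mult_vector)

lemma transpose_Hmat [simp]: "transpose (Hmat::real^'n^'n) = Hmat"
  by (simp add: Hmat_def ones_mat_def transpose_def vec_eq_iff)

lemma transpose_Kmat [simp]: "transpose (Kmat::real^'n^'n) = Kmat"
  by (simp add: Kmat_def ones_mat_def transpose_def vec_eq_iff mat_def)

lemma Hmat_mult_const_vector:
  assumes "\<And>a b. z$a = z$b"
  shows "(Hmat::real^'n^'n) *v z = z"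
proof (subst vec_eq_iff, intro allI)
  fix i
  have "(\<Sum>j\<in>UNIV. z$j) = (\<Sum>j::'n\<in>UNIV. z$i)"
    by (rule sum.cong[OF refl]) (rule assms)
  then show "(Hmat *v z)$i = z$i"
    by (simp add: Hmat_mult_vector)
qed

section \<open>The graph Laplacian\<close>

lemma lap_mult_vector_nth:
  assumes "weighted_graph W"
  shows "(lap W *v z)$i = (\<Sum>j\<in>UNIV. W$i$j * (z$i - z$j))"
proof -
  have "W$i$i = 0" using assms by (simp add: weighted_graph_def)
  then have "(\<Sum>j\<in>UNIV. W$i$j * (z$i - z$j)) = (\<Sum>j\<in>UNIV-{i}. W$i$j * (z$i - z$j))"
    by (simp add: sum.remove[of UNIV i])
  also have "\<dots> = (\<Sum>j\<in>UNIV-{i}. W$i$j) * z$i - (\<Sum>j\<in>UNIV-{i}. W$i$j * z$j)"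
    by (simp add: right_diff_distrib sum_subtractf sum_distrib_right)
  also have "\<dots> = (\<Sum>j\<in>UNIV. (lap W)$i$j * z$j)"
    by (simp add: sum.remove[of UNIV i] lap_def sum_negf)
  finally show ?thesis
    by (simp add: matrix_vector_mult_def)
qed

lemma transpose_lap:
  assumes "weighted_graph W"
  shows "transpose (lap W) = lap W"
  using assms by (auto simp: transpose_def lap_def vec_eq_iff weighted_graph_def)

lemma lap_quadratic_form:
  assumes "weighted_graph W"
  shows "z \<bullet> (lap W *v z) = (\<Sum>i\<in>UNIV. \<Sum>j\<in>UNIV. W$i$j * (z$i - z$j)^2) / 2"
proof -
  have sym: "\<And>i j. W$i$j = W$j$i" using assms by (simp add: weighted_graph_def)
  define S where "S = (\<Sum>i\<in>UNIV. \<Sum>j\<in>UNIV. W$i$j * (z$i * (z$i - z$j)))"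
  have form: "z \<bullet> (lap W *v z) = S"
    by (simp add: S_def inner_vec_def lap_mult_vector_nth[OF assms] sum_distrib_left algebra_simps)
  have swapped: "S = (\<Sum>i\<in>UNIV. \<Sum>j\<in>UNIV. W$i$j * (z$j * (z$j - z$i)))"
    unfolding S_def by (subst sum.swap) (simp add: sym)
  have "S + S = (\<Sum>i\<in>UNIV. \<Sum>j\<in>UNIV. W$i$j * (z$i - z$j)^2)"
    by (subst (2) swapped) (simp add: S_def sum.distrib[symmetric] power2_eq_square algebra_simps)
  with form show ?thesis by simp
qed

lemma lap_psd:
  assumes "weighted_graph W"
  shows "0 \<le> z \<bullet> (lap W *v z)"
  using assms by (simp add: lap_quadratic_form weighted_graph_def sum_nonneg)

lemma Hmat_lap [simp]:
  assumes "weighted_graph W"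
  shows "Hmat ** lap W = 0"
proof -
  have sym: "\<And>i j. W$i$j = W$j$i" using assms by (simp add: weighted_graph_def)
  have "(\<Sum>i\<in>UNIV. (lap W *v z)$i) = 0" for z
  proof -
    define S where "S = (\<Sum>i\<in>UNIV. \<Sum>j\<in>UNIV. W$i$j * (z$i - z$j))"
    have "S = (\<Sum>i\<in>UNIV. \<Sum>j\<in>UNIV. W$i$j * (z$j - z$i))"
      unfolding S_def by (subst sum.swap) (simp add: sym)
    also have "\<dots> = - S"
      by (simp add: S_def sum_negf[symmetric] algebra_simps)
    finally show ?thesis by (simp add: lap_mult_vector_nth[OF assms] S_def[symmetric])
  qed
  then show ?thesis
    by (simp add: matrix_eq matrix_vector_mul_assoc[symmetric] Hmat_mult_vector vec_eq_iff)
qed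

lemma lap_Hmat [simp]:
  assumes "weighted_graph W"
  shows "lap W ** Hmat = 0"
  by (simp add: matrix_eq matrix_vector_mul_assoc[symmetric] Hmat_mult_vector vec_eq_iff
      lap_mult_vector_nth[OF assms])

lemma Kmat_lap [simp]:
  assumes "weighted_graph W"
  shows "Kmat ** lap W = lap W"
  using Hmat_lap[OF assms]
  by (simp add: matrix_eq matrix_vector_mul_assoc[symmetric] Kmat_mult_vector)

lemma lap_Kmat [simp]:
  assumes "weighted_graph W"
  shows "lap W ** Kmat = lap W"
  using lap_Hmat[OF assms]
  by (simp add: matrix_eq matrix_vector_mul_assoc[symmetric] Kmat_mult_vector
      matrix_vector_mult_diff_distrib)

lemma lap_quadratic_form_eq_0_imp_const:
  assumes "weighted_graph W" and "graph_connected W" and "z \<bullet> (lap W *v z) = 0"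
  shows "z$i = z$j"
proof -
  have nonneg: "\<And>i j. 0 \<le> W$i$j * (z$i - z$j)^2"
    using assms(1) by (simp add: weighted_graph_def)
  have "(\<Sum>i\<in>UNIV. \<Sum>j\<in>UNIV. W$i$j * (z$i - z$j)^2) = 0"
    using assms(3) by (simp add: lap_quadratic_form[OF assms(1)])
  then have "W$a$b * (z$a - z$b)^2 = 0" for a b
    by (simp add: sum_nonneg_eq_0_iff sum_nonneg nonneg)
  then have edge: "\<And>a b. 0 < W$a$b \<Longrightarrow> z$a = z$b"
    by (metis less_irrefl mult_eq_0_iff power_eq_0_iff right_minus_eq)
  have "(i, j) \<in> {(a, b). 0 < W$a$b}\<^sup>*"
    using assms(2) by (simp add: graph_connected_def)
  then show ?thesis
    by (induction rule: rtrancl_induct) (auto dest: edge)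
qed

section \<open>Spectral bounds and pseudoinverse of a connected graph Laplacian\<close>

locale connected_graph =
  fixes W :: "real^'n^'n"
  assumes two_nodes: "CARD('n) \<ge> 2"
    and weighted: "weighted_graph W"
    and connected: "graph_connected W"
begin

lemmas lap_projection_simps [simp] =
  Hmat_lap[OF weighted] lap_Hmat[OF weighted] Kmat_lap[OF weighted] lap_Kmat[OF weighted]
  transpose_lap[OF weighted]

lemma lap_quadratic_form_Kmat: "(Kmat *v z) \<bullet> (lap W *v (Kmat *v z)) = z \<bullet> (lap W *v z)"
proof -
  have "(Kmat *v z) \<bullet> (lap W *v (Kmat *v z)) = (Kmat *v z) \<bullet> (lap W *v z)"
    by (simp add: matrix_vector_mul_assoc)
  also have "\<dots> = z \<bullet> ((Kmat ** lap W) *v z)"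
    using symmetric_inner_mult_vector[OF transpose_Kmat, of z "lap W *v z"]
    by (simp add: matrix_vector_mul_assoc)
  finally show ?thesis by simp
qed

text \<open>The smallest positive eigenvalue is the minimum of the Rayleigh quotient on the
  orthogonal complement of the constant vectors, which is the kernel of the Laplacian.\<close>

lemma lap_min_on_mean_zero_vectors:
  "\<exists>x. norm x = 1 \<and> Hmat *v x = 0 \<and>
     (\<forall>z. Hmat *v z = 0 \<longrightarrow> (x \<bullet> (lap W *v x)) * (z \<bullet> z) \<le> z \<bullet> (lap W *v z))"
proof -
  define T where "T = sphere (0::real^'n) 1 \<inter> {z. Hmat *v z = 0}"
  obtain i j :: 'n where "i \<noteq> j"
  proof -
    have "\<not> (\<forall>i j::'n. i = j)"
      using two_nodes card_le_Suc0_iff_eq[of "UNIV::'n set"] by auto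
    then show ?thesis using that by blast
  qed
  define y where "y = axis i (1::real) - axis j 1"
  have "y \<noteq> 0" using \<open>i \<noteq> j\<close> by (simp add: y_def axis_eq_axis)
  moreover have "Hmat *v y = 0"
    by (simp add: y_def Hmat_mult_vector vec_eq_iff axis_def sum_subtractf)
  ultimately have "y /\<^sub>R norm y \<in> T"
    by (simp add: T_def matrix_vector_mult_scaleR)
  moreover have "compact T"
    unfolding T_def
    by (intro compact_Int_closed compact_sphere closed_Collect_eq) (auto intro!: continuous_intros)
  ultimately have "\<exists>x\<in>T. \<forall>z\<in>T. x \<bullet> (lap W *v x) \<le> z \<bullet> (lap W *v z)"
    by (intro continuous_attains_inf) (auto intro!: continuous_intros)
  then obtain x where "x \<in> T" and xmin: "\<And>z. z \<in> T \<Longrightarrow> x \<bullet> (lap W *v x) \<le> z \<bullet> (lap W *v z)"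
    by blast
  have "(x \<bullet> (lap W *v x)) * (z \<bullet> z) \<le> z \<bullet> (lap W *v z)" if "Hmat *v z = 0" for z
  proof (cases "z = 0")
    case False
    have "(norm z)^2 * (x \<bullet> (lap W *v x)) \<le> (norm z)^2 * ((z /\<^sub>R norm z) \<bullet> (lap W *v (z /\<^sub>R norm z)))"
      using xmin[of "z /\<^sub>R norm z"] False that
      by (simp add: T_def matrix_vector_mult_scaleR mult_left_mono)
    then show ?thesis
      using quadratic_form_normalize[OF False, of "lap W"] by (simp add: power2_norm_eq_inner mult.commute)
  qed simp
  with \<open>x \<in> T\<close> show ?thesis
    by (auto simp: T_def)
qed

lemma positive_eigenvalue_bound:
  "\<exists>l>0. is_eigenvalue (lap W) l \<and> (\<forall>z. l * ((Kmat *v z) \<bullet> (Kmat *v z)) \<le> z \<bullet> (lap W *v z))"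
proof -
  obtain x where x: "norm x = 1" "Hmat *v x = 0"
    and min: "\<And>z. Hmat *v z = 0 \<Longrightarrow> (x \<bullet> (lap W *v x)) * (z \<bullet> z) \<le> z \<bullet> (lap W *v z)"
    using lap_min_on_mean_zero_vectors by blast
  define l where "l = x \<bullet> (lap W *v x)"
  have bound: "l * ((Kmat *v z) \<bullet> (Kmat *v z)) \<le> z \<bullet> (lap W *v z)" for z
    using min[of "Kmat *v z"] lap_quadratic_form_Kmat[of z]
    by (simp add: l_def matrix_vector_mul_assoc)
  have Kx: "Kmat *v x = x" using x by (simp add: Kmat_mult_vector)
  define M where "M = lap W - l *\<^sub>R Kmat"
  have Mv: "M *v z = lap W *v z - l *\<^sub>R (Kmat *v z)" for z
    by (simp add: M_def matrix_vector_mult_diff_rdistrib scaleR_matrix_vector_assoc[symmetric])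
  have "transpose M = M"
    by (simp add: M_def transpose_diff transpose_scalar)
  moreover have "0 \<le> z \<bullet> (M *v z)" for z
    using bound[of z] symmetric_idempotent_quadratic_form[OF transpose_Kmat Kmat_idem, of z]
    by (simp add: Mv inner_diff_right)
  moreover have "x \<bullet> (M *v x) = 0"
    using x Kx by (simp add: Mv inner_diff_right l_def power2_norm_eq_inner[symmetric])
  ultimately have "M *v x = 0"
    by (rule psd_mult_vector_eq_0)
  then have eigen: "lap W *v x = l *\<^sub>R x" using Kx by (simp add: Mv)
  have "x \<noteq> 0" using x by auto
  have "l \<noteq> 0"
  proof
    assume "l = 0"
    then have "Hmat *v x = x"
      using lap_quadratic_form_eq_0_imp_const[OF weighted connected]
      by (intro Hmat_mult_const_vector) (simp add: l_def)
    with x \<open>x \<noteq> 0\<close> show False by simp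
  qed
  moreover have "0 \<le> l" using lap_psd[OF weighted] by (simp add: l_def)
  moreover have "is_eigenvalue (lap W) l"
    using eigen \<open>x \<noteq> 0\<close> by (auto simp: is_eigenvalue_def)
  ultimately show ?thesis using bound by (intro exI[of _ l]) auto
qed

lemma finite_lap_eigenvalues: "finite {c. is_eigenvalue (lap W) c}"
  by (simp add: finite_eigenvalues_symmetric)

lemma eigenvalue_le_rho: "is_eigenvalue (lap W) c \<Longrightarrow> c \<le> rho (lap W)"
  unfolding rho_def using finite_lap_eigenvalues by (intro Max_ge) auto

lemma rho2_le_eigenvalue: "0 < c \<Longrightarrow> is_eigenvalue (lap W) c \<Longrightarrow> rho2 (lap W) \<le> c"
  unfolding rho2_def using finite_lap_eigenvalues by (intro Min_le) (auto elim: rev_finite_subset)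

lemma rho2_pos_and_eigenvalue: "0 < rho2 (lap W) \<and> is_eigenvalue (lap W) (rho2 (lap W))"
proof -
  have "finite {c. 0 < c \<and> is_eigenvalue (lap W) c}"
    using finite_lap_eigenvalues by (rule rev_finite_subset) auto
  moreover have "{c. 0 < c \<and> is_eigenvalue (lap W) c} \<noteq> {}"
    using positive_eigenvalue_bound by auto
  ultimately show ?thesis
    unfolding rho2_def using Min_in by blast
qed

lemma rho2_pos: "0 < rho2 (lap W)"
  using rho2_pos_and_eigenvalue by blast

lemma rho2_le_rho: "rho2 (lap W) \<le> rho (lap W)"
  using rho2_pos_and_eigenvalue eigenvalue_le_rho by blast

lemma rho2_le_lap_quadratic_form: "rho2 (lap W) * ((Kmat *v z) \<bullet> (Kmat *v z)) \<le> z \<bullet> (lap W *v z)"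
proof -
  obtain l where "0 < l" "is_eigenvalue (lap W) l"
    and "l * ((Kmat *v z) \<bullet> (Kmat *v z)) \<le> z \<bullet> (lap W *v z)"
    using positive_eigenvalue_bound by blast
  then show ?thesis
    using rho2_le_eigenvalue by (meson inner_ge_zero mult_right_mono order_trans)
qed

lemma lap_quadratic_form_le_rho_inner: "z \<bullet> (lap W *v z) \<le> rho (lap W) * (z \<bullet> z)"
proof -
  obtain l where "is_eigenvalue (lap W) l" and "z \<bullet> (lap W *v z) \<le> l * (z \<bullet> z)"
    using symmetric_max_eigenvalue_bound[of "lap W"] by auto
  then show ?thesis
    using eigenvalue_le_rho by (meson inner_ge_zero mult_right_mono order_trans)
qed

lemma lap_quadratic_form_le_rho: "z \<bullet> (lap W *v z) \<le> rho (lap W) * ((Kmat *v z) \<bullet> (Kmat *v z))"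
  using lap_quadratic_form_le_rho_inner[of "Kmat *v z"] by (simp add: lap_quadratic_form_Kmat)

text \<open>With p = Lz, Cauchy--Schwarz for the semidefinite form of L gives
  (p \<bullet> p)^2 = (p \<bullet> Lz)^2 \<le> (p \<bullet> Lp)(z \<bullet> Lz).\<close>

lemma lap_norm_le_rho: "(lap W *v z) \<bullet> (lap W *v z) \<le> (rho (lap W))^2 * ((Kmat *v z) \<bullet> (Kmat *v z))"
proof -
  define p where "p = lap W *v z"
  have "(p \<bullet> p)^2 \<le> (p \<bullet> (lap W *v p)) * (z \<bullet> (lap W *v z))"
    using psd_cauchy_schwarz[of "lap W" p z] lap_psd[OF weighted] by (simp add: p_def)
  also have "\<dots> \<le> (rho (lap W) * (p \<bullet> p)) * (rho (lap W) * ((Kmat *v z) \<bullet> (Kmat *v z)))"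
    using lap_quadratic_form_le_rho_inner[of p] lap_quadratic_form_le_rho[of z]
      lap_psd[OF weighted, of p] lap_psd[OF weighted, of z]
    by (intro mult_mono) auto
  finally have "(p \<bullet> p) * (p \<bullet> p) \<le> (p \<bullet> p) * ((rho (lap W))^2 * ((Kmat *v z) \<bullet> (Kmat *v z)))"
    by (simp add: power2_eq_square algebra_simps)
  then show ?thesis
    by (cases "p \<bullet> p = 0") (auto simp: p_def intro: order_trans[OF _ mult_nonneg_nonneg])
qed

lemma lap_plus_Hmat_injective:
  assumes "(lap W + Hmat) *v z = 0"
  shows "z = 0"
proof -
  have "0 = z \<bullet> ((lap W + Hmat) *v z)"
    using assms by simp
  also have "\<dots> = z \<bullet> (lap W *v z) + (Hmat *v z) \<bullet> (Hmat *v z)"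
    using symmetric_idempotent_quadratic_form[of Hmat z]
    by (simp add: matrix_vector_mult_add_rdistrib inner_add_right)
  finally have "z \<bullet> (lap W *v z) + (Hmat *v z) \<bullet> (Hmat *v z) = 0" by simp
  then have "z \<bullet> (lap W *v z) = 0" and "(Hmat *v z) \<bullet> (Hmat *v z) = 0"
    using lap_psd[OF weighted, of z] inner_ge_zero[of "Hmat *v z"] by linarith+
  then have "z \<bullet> (lap W *v z) = 0" and Hz: "Hmat *v z = 0"
    by simp_all
  then have "Hmat *v z = z"
    using lap_quadratic_form_eq_0_imp_const[OF weighted connected] by (intro Hmat_mult_const_vector)
  with Hz show ?thesis by simp
qed

text \<open>The pseudoinverse of L is inverse (L + H) - H.\<close>

lemma lap_pseudo_inverse_exists:
  "\<exists>Q. lap W ** Q = Kmat \<and> Q ** lap W = Kmat \<and> Kmat ** Q = Q \<and> transpose Q = Q"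
proof -
  define M where "M = lap W + Hmat"
  obtain B where BM: "B ** M = mat 1"
    using lap_plus_Hmat_injective matrix_left_invertible_ker unfolding M_def by blast
  then have MB: "M ** B = mat 1"
    using matrix_left_right_inverse by blast
  have "transpose M = M"
    by (simp add: M_def transpose_add)
  then have "M ** transpose B = mat 1"
    using BM by (metis matrix_transpose_mul transpose_mat)
  then have Bsym: "transpose B = B"
    using BM by (metis matrix_mul_assoc matrix_mul_lid matrix_mul_rid)
  have "B ** Hmat = B ** (M ** Hmat)"
    by (simp add: M_def matrix_add_rdistrib)
  then have BH: "B ** Hmat = Hmat"
    by (simp add: matrix_mul_assoc BM)
  have "Hmat ** B = (Hmat ** M) ** B"
    by (simp add: M_def matrix_add_ldistrib)
  then have HB: "Hmat ** B = Hmat"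
    by (simp add: matrix_mul_assoc[symmetric] MB)
  define Q where "Q = B - Hmat"
  have "lap W ** Q = (M - Hmat) ** B"
    by (simp add: Q_def M_def matrix_diff_ldistrib)
  then have "lap W ** Q = Kmat"
    by (simp add: matrix_diff_rdistrib MB HB Kmat_eq)
  moreover have "Q ** lap W = B ** (M - Hmat)"
    by (simp add: Q_def M_def matrix_diff_rdistrib)
  then have "Q ** lap W = Kmat"
    by (simp add: matrix_diff_ldistrib BM BH Kmat_eq)
  moreover have "Kmat ** Q = Q"
    by (simp add: Kmat_eq Q_def matrix_diff_ldistrib matrix_diff_rdistrib BH HB)
  moreover have "transpose Q = Q"
    by (simp add: Q_def transpose_diff Bsym)
  ultimately show ?thesis by blast
qed

lemma
  shows lap_pinv [simp]: "lap W ** pinv (lap W) = Kmat"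
    and pinv_lap [simp]: "pinv (lap W) ** lap W = Kmat"
    and Kmat_pinv [simp]: "Kmat ** pinv (lap W) = pinv (lap W)"
    and transpose_pinv [simp]: "transpose (pinv (lap W)) = pinv (lap W)"
proof -
  obtain Q where Q: "lap W ** Q = Kmat" "Q ** lap W = Kmat" "Kmat ** Q = Q" "transpose Q = Q"
    using lap_pseudo_inverse_exists by blast
  have "pinv (lap W) = Q"
    by (rule pinv_eqI) (simp_all add: Q)
  then show "lap W ** pinv (lap W) = Kmat" "pinv (lap W) ** lap W = Kmat"
    "Kmat ** pinv (lap W) = pinv (lap W)"
    "transpose (pinv (lap W)) = pinv (lap W)"
    using Q by simp_all
qed

end

definition slice :: "(real^'p)^'n \<Rightarrow> 'p \<Rightarrow> real^'n" where
  "slice z k = (\<chi> i. z$i$k)"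

lemma slice_kmult [simp]: "slice (kmult M z) k = M *v slice z k"
  by (simp add: slice_def kmult_def matrix_vector_mult_def vec_eq_iff)

lemma slice_add [simp]: "slice (y + z) k = slice y k + slice z k"
  and slice_diff [simp]: "slice (y - z) k = slice y k - slice z k"
  and slice_scaleR [simp]: "slice (c *\<^sub>R z) k = c *\<^sub>R slice z k"
  and slice_zero [simp]: "slice 0 k = 0"
  by (simp_all add: slice_def vec_eq_iff)

lemma slice_eqI: "(\<And>k. slice y k = slice z k) \<Longrightarrow> y = z"
  by (auto simp: slice_def vec_eq_iff)

lemma inner_eq_sum_slices: "y \<bullet> z = (\<Sum>k\<in>UNIV. slice y k \<bullet> slice z k)"
  by (simp add: inner_vec_def slice_def) (rule sum.swap)

lemma kmult_add: "kmult M (y + z) = kmult M y + kmult M z"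
  by (rule slice_eqI) (simp add: matrix_vector_right_distrib)

lemma kmult_diff: "kmult M (y - z) = kmult M y - kmult M z"
  by (rule slice_eqI) (simp add: matrix_vector_mult_diff_distrib)

lemma kmult_scaleR: "kmult M (c *\<^sub>R z) = c *\<^sub>R kmult M z"
  by (rule slice_eqI) (simp add: matrix_vector_mult_scaleR)

lemma kmult_minus: "kmult M (- z) = - kmult M z"
  using kmult_scaleR[of M "-1" z] by simp

lemma kmult_matrix_add: "kmult (A + B) z = kmult A z + kmult B z"
  by (rule slice_eqI) (simp add: matrix_vector_mult_add_rdistrib)

lemma kmult_matrix_scaleR: "kmult (c *\<^sub>R A) z = c *\<^sub>R kmult A z"
  by (rule slice_eqI) (simp add: scaleR_matrix_vector_assoc)

lemma kmult_kmult: "kmult A (kmult B z) = kmult (A ** B) z"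
  by (rule slice_eqI) (simp add: matrix_vector_mul_assoc)

lemma kmult_zero_matrix [simp]: "kmult 0 z = 0"
  by (simp add: kmult_def vec_eq_iff)

lemma kmult_symmetric:
  assumes "transpose M = M"
  shows "y \<bullet> kmult M z = kmult M y \<bullet> z"
  by (simp add: inner_eq_sum_slices symmetric_inner_mult_vector[OF assms])

lemma kmult_nth: "kmult M z $ i = (\<Sum>j\<in>UNIV. M$i$j *\<^sub>R z$j)"
  by (simp add: kmult_def)

lemma kmult_Hmat_nth: "kmult Hmat z $ i = xbar (z::(real^'p)^'n)"
  by (simp add: kmult_def Hmat_def ones_mat_def xbar_def scaleR_sum_right)

lemma kmult_Kmat: "kmult Kmat z = z - kmult Hmat z"
  by (rule slice_eqI) (simp add: Kmat_mult_vector)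

lemma kmult_Kmat_nth: "kmult Kmat z $ i = z $ i - xbar (z::(real^'p)^'n)"
  by (simp add: kmult_Kmat kmult_Hmat_nth)

lemma inner_kmult_Hmat: "kmult Hmat y \<bullet> kmult Hmat z = real CARD('n) * (xbar (y::(real^'p)^'n) \<bullet> xbar z)"
  by (simp add: inner_vec_def kmult_Hmat_nth)

lemma inner_kmult_Kmat_self: "z \<bullet> kmult Kmat z = kmult Kmat z \<bullet> kmult Kmat z"
  using kmult_symmetric[OF transpose_Kmat, of z "kmult Kmat z"] by (simp add: kmult_kmult)

lemma inner_self_split_Kmat_Hmat: "z \<bullet> z = kmult Kmat z \<bullet> kmult Kmat z + kmult Hmat z \<bullet> kmult Hmat z"
proof -
  have "kmult Kmat z \<bullet> kmult Hmat z = 0"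
    using kmult_symmetric[OF transpose_Kmat, of z "kmult Hmat z"] by (simp add: kmult_kmult)
  moreover have "z = kmult Kmat z + kmult Hmat z"
    by (simp add: kmult_Kmat)
  then have "z \<bullet> z = (kmult Kmat z + kmult Hmat z) \<bullet> (kmult Kmat z + kmult Hmat z)"
    by simp
  ultimately show ?thesis
    by (simp add: inner_add_left inner_add_right inner_commute)
qed

lemma kmult_Kmat_inner_le: "kmult Kmat z \<bullet> kmult Kmat z \<le> z \<bullet> z"
  and kmult_Hmat_inner_le: "kmult Hmat z \<bullet> kmult Hmat z \<le> z \<bullet> z"
  by (simp_all add: inner_self_split_Kmat_Hmat[of z])

lemma xbar_diff: "xbar (y - z) = xbar y - xbar (z::(real^'p)^'n)"
  and xbar_scaleR: "xbar (c *\<^sub>R z) = c *\<^sub>R xbar z"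
  by (simp_all add: xbar_def sum.distrib sum_subtractf scaleR_sum_right algebra_simps)

lemma xbar_eq_iff_kmult_Hmat: "xbar y = xbar z \<longleftrightarrow> kmult Hmat y = kmult Hmat (z::(real^'p)^'n)"
  by (simp add: vec_eq_iff kmult_Hmat_nth)

context connected_graph
begin

lemma rho2_le_kmult_lap: "rho2 (lap W) * (kmult Kmat z \<bullet> kmult Kmat z) \<le> z \<bullet> kmult (lap W) z"
  using rho2_le_lap_quadratic_form
  by (simp add: inner_eq_sum_slices sum_distrib_left sum_mono)

lemma kmult_lap_le_rho: "z \<bullet> kmult (lap W) z \<le> rho (lap W) * (kmult Kmat z \<bullet> kmult Kmat z)"
  using lap_quadratic_form_le_rho
  by (simp add: inner_eq_sum_slices sum_distrib_left sum_mono)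

lemma kmult_lap_inner_le_rho:
  "kmult (lap W) z \<bullet> kmult (lap W) z \<le> (rho (lap W))^2 * (kmult Kmat z \<bullet> kmult Kmat z)"
  using lap_norm_le_rho
  by (simp add: inner_eq_sum_slices sum_distrib_left sum_mono)

lemma rho2_norm_kmult_pinv_le: "rho2 (lap W) * norm (kmult (pinv (lap W)) z) \<le> norm (kmult Kmat z)"
proof -
  define y where "y = kmult (pinv (lap W)) z"
  have "rho2 (lap W) * (y \<bullet> y) \<le> y \<bullet> kmult (lap W) y"
    using rho2_le_kmult_lap[of y] by (simp add: y_def kmult_kmult)
  also have "\<dots> = y \<bullet> kmult Kmat z"
    by (simp add: y_def kmult_kmult)
  also have "\<dots> \<le> norm y * norm (kmult Kmat z)"
    by (rule norm_cauchy_schwarz)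
  finally have "norm y * (rho2 (lap W) * norm y) \<le> norm y * norm (kmult Kmat z)"
    by (simp add: power2_norm_eq_inner[symmetric] power2_eq_square algebra_simps)
  then show ?thesis
    by (cases "norm y = 0") (auto simp: y_def)
qed

end

lemma descent_lemma:
  fixes F :: "'a::real_inner \<Rightarrow> real"
  assumes deriv: "\<And>y. (F has_derivative (\<lambda>h. gr y \<bullet> h)) (at y)"
    and lip: "\<And>y z. norm (gr y - gr z) \<le> Lf * norm (y - z)"
  shows "F (y + h) \<le> F y + gr y \<bullet> h + Lf/2 * (norm h)^2"
proof -
  define \<phi> where "\<phi> t = F (y + t *\<^sub>R h) - t * (gr y \<bullet> h) - Lf/2 * t^2 * (norm h)^2" for t
  have \<phi>': "(\<phi> has_real_derivative (gr (y + t *\<^sub>R h) \<bullet> h - gr y \<bullet> h - Lf * t * (norm h)^2)) (at t)"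
    for t
  proof -
    have "((\<lambda>t. F (y + t *\<^sub>R h)) has_derivative (\<lambda>s. gr (y + t *\<^sub>R h) \<bullet> (s *\<^sub>R h))) (at t)"
      by (rule has_derivative_compose[OF _ deriv]) (auto intro!: derivative_eq_intros)
    then have "((\<lambda>t. F (y + t *\<^sub>R h)) has_real_derivative (gr (y + t *\<^sub>R h) \<bullet> h)) (at t)"
      by (rule has_derivative_imp_has_field_derivative) (simp add: mult.commute)
    then show ?thesis unfolding \<phi>_def
      by (auto intro!: derivative_eq_intros simp: power2_eq_square)
  qed
  have "\<phi> 1 \<le> \<phi> 0"
  proof (rule DERIV_nonpos_imp_nonincreasing[of 0 1])
    fix t :: real assume "0 \<le> t" "t \<le> 1"
    have "(gr (y + t *\<^sub>R h) - gr y) \<bullet> h \<le> norm (gr (y + t *\<^sub>R h) - gr y) * norm h"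
      by (rule norm_cauchy_schwarz)
    also have "\<dots> \<le> Lf * norm (t *\<^sub>R h) * norm h"
      using lip[of "y + t *\<^sub>R h" y] by (intro mult_right_mono) auto
    also have "\<dots> = Lf * t * (norm h)^2"
      using \<open>0 \<le> t\<close> by (simp add: power2_eq_square)
    finally have "gr (y + t *\<^sub>R h) \<bullet> h - gr y \<bullet> h - Lf * t * (norm h)^2 \<le> 0"
      by (simp add: inner_diff_left)
    then show "\<exists>y'. (\<phi> has_real_derivative y') (at t) \<and> y' \<le> 0"
      using \<phi>' by blast
  qed simp
  then show ?thesis by (simp add: \<phi>_def)
qed

lemma mult_le_weighted_squares:
  fixes a b t :: real
  assumes "0 < t"
  shows "a * b \<le> (t * a^2 + b^2 / t) / 2"
proof -
  have "0 \<le> (t * a - b)^2 / t"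
    using assms by simp
  also have "\<dots> = t * a^2 + b^2 / t - 2 * (a * b)"
    using assms by (simp add: field_simps power2_eq_square)
  finally show ?thesis by simp
qed

lemma inner_le_half_squares: "(y::'a::real_inner) \<bullet> z \<le> (y \<bullet> y + z \<bullet> z) / 2"
  using inner_ge_zero[of "y - z"] by (simp add: inner_diff_left inner_diff_right inner_commute)

lemma inner_self_le_of_norm_le:
  fixes p q :: "'a::real_inner"
  assumes "norm p \<le> c * norm q"
  shows "p \<bullet> p \<le> c^2 * (q \<bullet> q)"
proof -
  have "(norm p)^2 \<le> (c * norm q)^2"
    using assms by (intro power_mono) auto
  then show ?thesis
    by (simp add: power2_norm_eq_inner[symmetric] power_mult_distrib)
qed

section \<open>One step of the algorithm\<close>

lemma lyapV_eq:
  fixes z w :: "(real^'p)^'n"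
  shows "lyapV L f grad \<alpha> \<beta> z w =
     (let u = w + (1/\<beta>) *\<^sub>R g0col grad z in
        1/2 * (z \<bullet> kmult Kmat z) + 1/2 * (u \<bullet> kmult (pinv L + (\<alpha>/\<beta>) *\<^sub>R Kmat) u)
        + z \<bullet> kmult Kmat u + real CARD('n) * (avgf f (xbar z) - fstar f))"
  by (simp add: lyapV_def wnorm2_def kinner_def)

locale dgd_step = connected_graph W for W :: "real^'n^'n" +
  fixes f :: "'n \<Rightarrow> real^'p \<Rightarrow> real"
    and grad :: "'n \<Rightarrow> real^'p \<Rightarrow> real^'p"
    and Lf \<alpha> \<beta> \<eta> :: real
    and x v :: "(real^'p)^'n"
  assumes has_grad: "\<And>i y. (f i has_derivative (\<lambda>h. grad i y \<bullet> h)) (at y)"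
    and grad_lipschitz: "\<And>i y z. norm (grad i y - grad i z) \<le> Lf * norm (y - z)"
    and beta_lt_alpha: "\<beta> < \<alpha>" and beta_pos: "0 < \<beta>" and eta_pos: "0 < \<eta>"
    and mean_v: "kmult Hmat v = 0"
begin

definition "x_next = x - \<eta> *\<^sub>R (\<alpha> *\<^sub>R kmult (lap W) x + \<beta> *\<^sub>R v + gcol grad x)"
definition "v_next = v + (\<eta> * \<beta>) *\<^sub>R kmult (lap W) x"

definition "Lx = kmult (lap W) x"
definition "u = v + (1/\<beta>) *\<^sub>R g0col grad x"
definition "gerr = gcol grad x - g0col grad x"
definition "gstep = g0col grad x_next - g0col grad x"
definition "e = - \<eta> *\<^sub>R (\<alpha> *\<^sub>R Lx + \<beta> *\<^sub>R u + gerr)"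
definition "w = (\<eta> * \<beta>) *\<^sub>R Lx + (1/\<beta>) *\<^sub>R gstep"
definition "Pmat = pinv (lap W) + (\<alpha>/\<beta>) *\<^sub>R Kmat"

abbreviation "Kx \<equiv> kmult Kmat x"
abbreviation "Ku \<equiv> kmult Kmat u"
abbreviation "Kd \<equiv> kmult Kmat gerr"
abbreviation "Kg \<equiv> kmult Kmat gstep"
abbreviation "Qg \<equiv> kmult (pinv (lap W)) gstep"
abbreviation "Hd \<equiv> kmult Hmat gerr"
abbreviation "Hg \<equiv> kmult Hmat (gcol grad x)"
abbreviation "Hg0 \<equiv> kmult Hmat (g0col grad x)"

lemma x_next_eq: "x_next = x + e"
  using beta_pos by (simp add: x_next_def e_def u_def gerr_def Lx_def algebra_simps)

lemma u_next_eq: "v_next + (1/\<beta>) *\<^sub>R g0col grad x_next = u + w"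
  by (simp add: v_next_def u_def w_def gstep_def Lx_def algebra_simps)

lemma xbar_x_next: "xbar x_next = xbar x - \<eta> *\<^sub>R xbar (gcol grad x)"
  by (simp add: xbar_diff xbar_scaleR[symmetric] xbar_eq_iff_kmult_Hmat x_next_def
      kmult_diff kmult_add kmult_scaleR kmult_kmult mean_v)

lemma transpose_Pmat: "transpose Pmat = Pmat"
  by (simp add: Pmat_def transpose_add transpose_scalar)

lemma lyapV_increment:
  "lyapV (lap W) f grad \<alpha> \<beta> x_next v_next - lyapV (lap W) f grad \<alpha> \<beta> x v
   = x \<bullet> kmult Kmat e + 1/2 * (e \<bullet> kmult Kmat e) + u \<bullet> kmult Pmat w + 1/2 * (w \<bullet> kmult Pmat w)
     + x \<bullet> kmult Kmat w + e \<bullet> kmult Kmat u + e \<bullet> kmult Kmat w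
     + real CARD('n) * (avgf f (xbar x_next) - avgf f (xbar x))"
proof -
  have "lyapV (lap W) f grad \<alpha> \<beta> x_next v_next = 1/2 * (x_next \<bullet> kmult Kmat x_next)
      + 1/2 * ((u + w) \<bullet> kmult Pmat (u + w)) + x_next \<bullet> kmult Kmat (u + w)
      + real CARD('n) * (avgf f (xbar x_next) - fstar f)"
    by (simp add: lyapV_eq Let_def u_next_eq Pmat_def)
  moreover have "lyapV (lap W) f grad \<alpha> \<beta> x v = 1/2 * (x \<bullet> kmult Kmat x)
      + 1/2 * (u \<bullet> kmult Pmat u) + x \<bullet> kmult Kmat u
      + real CARD('n) * (avgf f (xbar x) - fstar f)"
    by (simp add: lyapV_eq Let_def u_def Pmat_def)
  moreover have "e \<bullet> kmult Kmat x = x \<bullet> kmult Kmat e" and "w \<bullet> kmult Pmat u = u \<bullet> kmult Pmat w"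
    using kmult_symmetric[OF transpose_Kmat, of x e] kmult_symmetric[OF transpose_Pmat, of u w]
    by (simp_all add: inner_commute)
  ultimately show ?thesis
    unfolding x_next_eq by (simp add: kmult_add inner_add_left inner_add_right algebra_simps)
qed

lemma kmult_Kmat_Lx: "kmult Kmat Lx = Lx"
  and kmult_pinv_Lx: "kmult (pinv (lap W)) Lx = Kx"
  by (simp_all add: Lx_def kmult_kmult)

lemma kmult_Kmat_e: "kmult Kmat e = - \<eta> *\<^sub>R (\<alpha> *\<^sub>R Lx + \<beta> *\<^sub>R Ku + Kd)"
  by (simp add: e_def kmult_add kmult_scaleR kmult_minus kmult_Kmat_Lx)

lemma kmult_Kmat_w: "kmult Kmat w = (\<eta> * \<beta>) *\<^sub>R Lx + (1/\<beta>) *\<^sub>R Kg"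
  by (simp add: w_def kmult_add kmult_scaleR kmult_Kmat_Lx)

lemma kmult_pinv_w: "kmult (pinv (lap W)) w = (\<eta> * \<beta>) *\<^sub>R Kx + (1/\<beta>) *\<^sub>R Qg"
  by (simp add: w_def kmult_add kmult_scaleR kmult_pinv_Lx)

lemma inner_Kmat_swap: "y \<bullet> kmult Kmat z = kmult Kmat y \<bullet> z"
  by (rule kmult_symmetric[OF transpose_Kmat])

lemma increment_consensus_terms:
  shows "x \<bullet> kmult Kmat e = - \<eta> * (\<alpha> * (x \<bullet> Lx) + \<beta> * (x \<bullet> Ku) + Kx \<bullet> gerr)"
    and "e \<bullet> kmult Kmat e = \<eta>^2 * (\<alpha>^2 * (Lx \<bullet> Lx) + \<beta>^2 * (Ku \<bullet> Ku) + Kd \<bullet> Kd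
          + 2 * \<alpha> * \<beta> * (Lx \<bullet> Ku) + 2 * \<alpha> * (Lx \<bullet> Kd) + 2 * \<beta> * (Ku \<bullet> Kd))"
proof -
  show "x \<bullet> kmult Kmat e = - \<eta> * (\<alpha> * (x \<bullet> Lx) + \<beta> * (x \<bullet> Ku) + Kx \<bullet> gerr)"
    using inner_Kmat_swap[of x gerr] by (simp add: kmult_Kmat_e inner_add_right algebra_simps)
  have "e \<bullet> kmult Kmat e = kmult Kmat e \<bullet> kmult Kmat e"
    by (rule inner_kmult_Kmat_self)
  then show "e \<bullet> kmult Kmat e = \<eta>^2 * (\<alpha>^2 * (Lx \<bullet> Lx) + \<beta>^2 * (Ku \<bullet> Ku) + Kd \<bullet> Kd
          + 2 * \<alpha> * \<beta> * (Lx \<bullet> Ku) + 2 * \<alpha> * (Lx \<bullet> Kd) + 2 * \<beta> * (Ku \<bullet> Kd))"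
    by (simp add: kmult_Kmat_e inner_add_left inner_add_right inner_commute power2_eq_square
        algebra_simps)
qed

lemma increment_dual_terms:
  shows "u \<bullet> kmult Pmat w
      = \<eta> * \<beta> * (x \<bullet> Ku) + (Ku \<bullet> Qg) / \<beta> + \<alpha> / \<beta> * (\<eta> * \<beta> * (Lx \<bullet> Ku) + (Ku \<bullet> gstep) / \<beta>)"
    and "w \<bullet> kmult Pmat w
      = \<eta>^2 * \<beta>^2 * (x \<bullet> Lx) + 2 * \<eta> * (Kx \<bullet> gstep) + (gstep \<bullet> Qg) / \<beta>^2
        + \<alpha> / \<beta> * (\<eta>^2 * \<beta>^2 * (Lx \<bullet> Lx) + 2 * \<eta> * (Lx \<bullet> Kg) + (Kg \<bullet> Kg) / \<beta>^2)"
proof -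
  have Pw: "kmult Pmat w = kmult (pinv (lap W)) w + (\<alpha>/\<beta>) *\<^sub>R kmult Kmat w"
    by (simp add: Pmat_def kmult_matrix_add kmult_matrix_scaleR)
  have "u \<bullet> Kx = x \<bullet> Ku" "u \<bullet> Lx = Lx \<bullet> Ku" "u \<bullet> Kg = Ku \<bullet> gstep"
    using inner_Kmat_swap[of u x] inner_Kmat_swap[of u Lx] inner_Kmat_swap[of u gstep]
    by (simp_all add: kmult_Kmat_Lx inner_commute)
  moreover have "u \<bullet> Qg = Ku \<bullet> Qg"
    using inner_Kmat_swap[of u Qg] by (simp add: kmult_kmult)
  ultimately show "u \<bullet> kmult Pmat w
      = \<eta> * \<beta> * (x \<bullet> Ku) + (Ku \<bullet> Qg) / \<beta> + \<alpha> / \<beta> * (\<eta> * \<beta> * (Lx \<bullet> Ku) + (Ku \<bullet> gstep) / \<beta>)"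
    by (simp add: Pw kmult_pinv_w kmult_Kmat_w inner_add_right algebra_simps)
  have "Lx \<bullet> Kx = x \<bullet> Lx" "gstep \<bullet> Kx = Kx \<bullet> gstep" "Lx \<bullet> Qg = Kx \<bullet> gstep"
    using kmult_symmetric[OF transpose_pinv, of Lx gstep] inner_Kmat_swap[of Lx x]
      inner_Kmat_swap[of x gstep]
    by (simp_all add: kmult_pinv_Lx kmult_Kmat_Lx inner_commute)
  then have wQw: "w \<bullet> kmult (pinv (lap W)) w
      = \<eta>^2 * \<beta>^2 * (x \<bullet> Lx) + 2 * \<eta> * (Kx \<bullet> gstep) + (gstep \<bullet> Qg) / \<beta>^2"
    using beta_pos by (simp only: kmult_pinv_w)
      (simp add: w_def inner_add_left inner_add_right power2_eq_square field_simps)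
  have "w \<bullet> kmult Kmat w = kmult Kmat w \<bullet> kmult Kmat w"
    by (rule inner_kmult_Kmat_self)
  also have "\<dots> = \<eta>^2 * \<beta>^2 * (Lx \<bullet> Lx) + 2 * \<eta> * (Lx \<bullet> Kg) + (Kg \<bullet> Kg) / \<beta>^2"
    using beta_pos inner_commute[of Kg Lx] by (simp only: kmult_Kmat_w)
      (simp add: inner_add_left inner_add_right power2_eq_square field_simps)
  finally have wKw: "w \<bullet> kmult Kmat w = \<eta>^2 * \<beta>^2 * (Lx \<bullet> Lx) + 2 * \<eta> * (Lx \<bullet> Kg) + (Kg \<bullet> Kg) / \<beta>^2" .
  show "w \<bullet> kmult Pmat w
      = \<eta>^2 * \<beta>^2 * (x \<bullet> Lx) + 2 * \<eta> * (Kx \<bullet> gstep) + (gstep \<bullet> Qg) / \<beta>^2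
        + \<alpha> / \<beta> * (\<eta>^2 * \<beta>^2 * (Lx \<bullet> Lx) + 2 * \<eta> * (Lx \<bullet> Kg) + (Kg \<bullet> Kg) / \<beta>^2)"
    by (simp only: Pw inner_add_right inner_scaleR_right wQw wKw)
qed

lemma increment_cross_terms:
  shows "x \<bullet> kmult Kmat w = \<eta> * \<beta> * (x \<bullet> Lx) + (Kx \<bullet> gstep) / \<beta>"
    and "e \<bullet> kmult Kmat u = - \<eta> * (\<alpha> * (Lx \<bullet> Ku) + \<beta> * (Ku \<bullet> Ku) + Ku \<bullet> Kd)"
    and "e \<bullet> kmult Kmat w = - \<eta> * (\<eta> * \<beta> * (\<alpha> * (Lx \<bullet> Lx) + \<beta> * (Lx \<bullet> Ku) + Lx \<bullet> Kd)
          + (\<alpha> * (Lx \<bullet> Kg) + \<beta> * (Ku \<bullet> gstep) + Kd \<bullet> gstep) / \<beta>)"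
proof -
  show "x \<bullet> kmult Kmat w = \<eta> * \<beta> * (x \<bullet> Lx) + (Kx \<bullet> gstep) / \<beta>"
    using inner_Kmat_swap[of x gstep] by (simp add: kmult_Kmat_w inner_add_right)
  have "e \<bullet> kmult Kmat u = kmult Kmat e \<bullet> u" "Lx \<bullet> u = Lx \<bullet> Ku" "Kd \<bullet> u = Ku \<bullet> Kd"
    "Ku \<bullet> u = Ku \<bullet> Ku"
    using inner_Kmat_swap[of e u] inner_Kmat_swap[of Lx u] inner_Kmat_swap[of Kd u]
      inner_Kmat_swap[of u u] inner_kmult_Kmat_self[of u]
    by (simp_all add: kmult_Kmat_Lx kmult_kmult inner_commute)
  then show "e \<bullet> kmult Kmat u = - \<eta> * (\<alpha> * (Lx \<bullet> Ku) + \<beta> * (Ku \<bullet> Ku) + Ku \<bullet> Kd)"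
    by (simp add: kmult_Kmat_e inner_add_left algebra_simps)
  have "e \<bullet> kmult Kmat w = kmult Kmat e \<bullet> w" "Lx \<bullet> gstep = Lx \<bullet> Kg"
    using inner_Kmat_swap[of e w] inner_Kmat_swap[of Lx gstep] by (simp_all add: kmult_Kmat_Lx)
  then show "e \<bullet> kmult Kmat w = - \<eta> * (\<eta> * \<beta> * (\<alpha> * (Lx \<bullet> Lx) + \<beta> * (Lx \<bullet> Ku) + Lx \<bullet> Kd)
          + (\<alpha> * (Lx \<bullet> Kg) + \<beta> * (Ku \<bullet> gstep) + Kd \<bullet> gstep) / \<beta>)"
    using beta_pos
    by (simp add: kmult_Kmat_e w_def inner_add_left inner_add_right inner_commute
        power2_eq_square add_divide_distrib algebra_simps)
qed

lemma lyapV_increment_expanded: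
  "lyapV (lap W) f grad \<alpha> \<beta> x_next v_next = lyapV (lap W) f grad \<alpha> \<beta> x v
     + (- \<eta> * (\<alpha> - \<beta>) * (x \<bullet> Lx)) + (- \<eta> * (Kx \<bullet> gerr)) + (- \<eta> * (Ku \<bullet> Kd))
     - \<eta> * \<beta> * (Ku \<bullet> Ku) + (Ku \<bullet> Qg) / \<beta> + \<alpha> / \<beta>^2 * (Ku \<bullet> gstep) + (Kx \<bullet> gstep) / \<beta>
     + \<eta>^2 * ((\<alpha>^2/2 - \<alpha>*\<beta>/2) * (Lx \<bullet> Lx)) + \<eta>^2 * (\<beta>^2/2 * (Ku \<bullet> Ku))
     + \<eta>^2 * ((Kd \<bullet> Kd) / 2) + \<eta>^2 * (\<beta> * (\<alpha> - \<beta>) * (Lx \<bullet> Ku)) + \<eta>^2 * ((\<alpha> - \<beta>) * (Lx \<bullet> Kd))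
     + \<eta>^2 * (\<beta> * (Ku \<bullet> Kd)) + \<eta>^2 * (\<beta>^2/2 * (x \<bullet> Lx))
     + \<eta> * (Kx \<bullet> gstep) + (- \<eta> * (Ku \<bullet> gstep)) + (- \<eta> / \<beta> * (Kd \<bullet> gstep))
     + ((gstep \<bullet> Qg) / (2 * \<beta>^2) + \<alpha> / (2 * \<beta>^3) * (Kg \<bullet> Kg))
     + real CARD('n) * (avgf f (xbar x_next) - avgf f (xbar x))" (is "?next = ?rhs")
proof -
  have "?next = lyapV (lap W) f grad \<alpha> \<beta> x v
      + (lyapV (lap W) f grad \<alpha> \<beta> x_next v_next - lyapV (lap W) f grad \<alpha> \<beta> x v)"
    by simp
  also have "\<dots> = ?rhs"
    unfolding lyapV_increment increment_consensus_terms increment_dual_terms increment_cross_terms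
    using beta_pos by (simp add: field_simps power2_eq_square power3_eq_cube)
  finally show ?thesis .
qed

lemma gerr_inner_le: "gerr \<bullet> gerr \<le> Lf^2 * (Kx \<bullet> Kx)"
proof -
  have "gerr $ i \<bullet> gerr $ i \<le> Lf^2 * (Kx $ i \<bullet> Kx $ i)" for i
    using grad_lipschitz[of i "x $ i" "xbar x"]
    by (intro inner_self_le_of_norm_le) (simp add: gerr_def gcol_def g0col_def kmult_Kmat_nth)
  then show ?thesis
    by (simp add: inner_vec_def sum_distrib_left sum_mono)
qed

lemma gstep_inner_le: "gstep \<bullet> gstep \<le> Lf^2 * \<eta>^2 * (Hg \<bullet> Hg)"
proof -
  have "norm (xbar x_next - xbar x) = \<eta> * norm (xbar (gcol grad x))"
    using eta_pos by (simp add: xbar_x_next)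
  then have "gstep $ i \<bullet> gstep $ i \<le> (Lf * \<eta>)^2 * (xbar (gcol grad x) \<bullet> xbar (gcol grad x))" for i
    using grad_lipschitz[of i "xbar x_next" "xbar x"]
    by (intro inner_self_le_of_norm_le) (simp add: gstep_def g0col_def mult.assoc)
  then have "gstep \<bullet> gstep \<le> (\<Sum>i::'n\<in>UNIV. (Lf * \<eta>)^2 * (xbar (gcol grad x) \<bullet> xbar (gcol grad x)))"
    unfolding inner_vec_def[of gstep gstep] by (rule sum_mono)
  then show ?thesis
    by (simp add: inner_kmult_Hmat power_mult_distrib mult_ac)
qed

lemma laplacian_terms_le:
  shows "- \<eta> * (\<alpha> - \<beta>) * (x \<bullet> Lx) \<le> - \<eta> * (\<alpha> - \<beta>) * rho2 (lap W) * (Kx \<bullet> Kx)"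
    and "\<eta>^2 * ((\<alpha>^2/2 - \<alpha>*\<beta>/2) * (Lx \<bullet> Lx)) \<le> \<eta>^2 * ((\<alpha>^2/2 - \<alpha>*\<beta>/2) * (rho (lap W))^2 * (Kx \<bullet> Kx))"
    and "\<eta>^2 * (\<beta> * (\<alpha> - \<beta>) * (Lx \<bullet> Ku))
      \<le> \<eta>^2 * ((\<alpha> - \<beta>)^2 * (rho (lap W))^2 * (Kx \<bullet> Kx) / 2 + \<beta>^2 * (Ku \<bullet> Ku) / 2)"
    and "\<eta>^2 * (\<beta>^2/2 * (x \<bullet> Lx)) \<le> \<eta>^2 * (\<beta>^2 * rho (lap W) * (Kx \<bullet> Kx) / 2)"
proof -
  have low: "rho2 (lap W) * (Kx \<bullet> Kx) \<le> x \<bullet> Lx"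
    and up: "x \<bullet> Lx \<le> rho (lap W) * (Kx \<bullet> Kx)"
    and sq: "Lx \<bullet> Lx \<le> (rho (lap W))^2 * (Kx \<bullet> Kx)"
    using rho2_le_kmult_lap kmult_lap_le_rho kmult_lap_inner_le_rho by (simp_all add: Lx_def)
  have "0 \<le> \<eta> * (\<alpha> - \<beta>)" using eta_pos beta_lt_alpha by simp
  from mult_left_mono[OF low this]
  show "- \<eta> * (\<alpha> - \<beta>) * (x \<bullet> Lx) \<le> - \<eta> * (\<alpha> - \<beta>) * rho2 (lap W) * (Kx \<bullet> Kx)"
    by (simp add: mult.assoc)
  have "0 \<le> \<alpha>^2/2 - \<alpha>*\<beta>/2"
    using beta_lt_alpha beta_pos by (simp add: power2_eq_square algebra_simps)
  then have "0 \<le> \<eta>^2 * (\<alpha>^2/2 - \<alpha>*\<beta>/2)"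
    by simp
  from mult_left_mono[OF sq this]
  show "\<eta>^2 * ((\<alpha>^2/2 - \<alpha>*\<beta>/2) * (Lx \<bullet> Lx)) \<le> \<eta>^2 * ((\<alpha>^2/2 - \<alpha>*\<beta>/2) * (rho (lap W))^2 * (Kx \<bullet> Kx))"
    by (simp add: mult.assoc)
  have "\<beta> * (\<alpha> - \<beta>) * (Lx \<bullet> Ku) = ((\<alpha> - \<beta>) *\<^sub>R Lx) \<bullet> (\<beta> *\<^sub>R Ku)"
    by simp
  also have "\<dots> \<le> ((\<alpha> - \<beta>)^2 * (Lx \<bullet> Lx) + \<beta>^2 * (Ku \<bullet> Ku)) / 2"
    using inner_le_half_squares[of "(\<alpha> - \<beta>) *\<^sub>R Lx" "\<beta> *\<^sub>R Ku"] by (simp add: power2_eq_square)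
  also have "\<dots> \<le> ((\<alpha> - \<beta>)^2 * ((rho (lap W))^2 * (Kx \<bullet> Kx)) + \<beta>^2 * (Ku \<bullet> Ku)) / 2"
    using sq by (simp add: mult_left_mono)
  finally show "\<eta>^2 * (\<beta> * (\<alpha> - \<beta>) * (Lx \<bullet> Ku))
      \<le> \<eta>^2 * ((\<alpha> - \<beta>)^2 * (rho (lap W))^2 * (Kx \<bullet> Kx) / 2 + \<beta>^2 * (Ku \<bullet> Ku) / 2)"
    by (simp add: mult_left_mono add_divide_distrib mult.assoc)
  show "\<eta>^2 * (\<beta>^2/2 * (x \<bullet> Lx)) \<le> \<eta>^2 * (\<beta>^2 * rho (lap W) * (Kx \<bullet> Kx) / 2)"
    using mult_left_mono[OF up, of "\<eta>^2 * \<beta>^2 / 2"] by (simp add: mult_ac)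
qed

lemma disagreement_terms_le:
  shows "- \<eta> * (Kx \<bullet> gerr) \<le> \<eta> * ((Kx \<bullet> Kx) / 2 + Lf^2 * (Kx \<bullet> Kx) / 2)"
    and "- \<eta> * (Ku \<bullet> Kd) \<le> \<eta> * ((Ku \<bullet> Ku) / 2 + Lf^2 * (Kx \<bullet> Kx) / 2)"
    and "\<eta> * (Hd \<bullet> Hd) / 2 \<le> \<eta> * Lf^2 * (Kx \<bullet> Kx) / 2"
    and "\<eta>^2 * ((Kd \<bullet> Kd) / 2) \<le> \<eta>^2 * (Lf^2 * (Kx \<bullet> Kx) / 2)"
    and "\<eta>^2 * ((\<alpha> - \<beta>) * (Lx \<bullet> Kd))
      \<le> \<eta>^2 * ((\<alpha> - \<beta>)^2 * (rho (lap W))^2 * (Kx \<bullet> Kx) / 2 + Lf^2 * (Kx \<bullet> Kx) / 2)"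
    and "\<eta>^2 * (\<beta> * (Ku \<bullet> Kd)) \<le> \<eta>^2 * (\<beta>^2 * (Ku \<bullet> Ku) / 2 + Lf^2 * (Kx \<bullet> Kx) / 2)"
proof -
  have gerr: "gerr \<bullet> gerr \<le> Lf^2 * (Kx \<bullet> Kx)" by (rule gerr_inner_le)
  have Kd: "Kd \<bullet> Kd \<le> Lf^2 * (Kx \<bullet> Kx)"
    using kmult_Kmat_inner_le[of gerr] gerr by linarith
  have eta: "0 \<le> \<eta>" and eta2: "0 \<le> \<eta>^2" using eta_pos by simp_all
  have "- (Kx \<bullet> gerr) \<le> (Kx \<bullet> Kx) / 2 + Lf^2 * (Kx \<bullet> Kx) / 2"
    using inner_le_half_squares[of Kx "- gerr"] gerr by simp
  from mult_left_mono[OF this eta]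
  show "- \<eta> * (Kx \<bullet> gerr) \<le> \<eta> * ((Kx \<bullet> Kx) / 2 + Lf^2 * (Kx \<bullet> Kx) / 2)"
    by simp
  have "- (Ku \<bullet> Kd) \<le> (Ku \<bullet> Ku) / 2 + Lf^2 * (Kx \<bullet> Kx) / 2"
    using inner_le_half_squares[of Ku "- Kd"] Kd by simp
  from mult_left_mono[OF this eta]
  show "- \<eta> * (Ku \<bullet> Kd) \<le> \<eta> * ((Ku \<bullet> Ku) / 2 + Lf^2 * (Kx \<bullet> Kx) / 2)"
    by simp
  have "(Hd \<bullet> Hd) / 2 \<le> Lf^2 * (Kx \<bullet> Kx) / 2"
    using kmult_Hmat_inner_le[of gerr] gerr by simp
  from mult_left_mono[OF this eta]
  show "\<eta> * (Hd \<bullet> Hd) / 2 \<le> \<eta> * Lf^2 * (Kx \<bullet> Kx) / 2"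
    by simp
  have "(Kd \<bullet> Kd) / 2 \<le> Lf^2 * (Kx \<bullet> Kx) / 2"
    using Kd by simp
  from mult_left_mono[OF this eta2]
  show "\<eta>^2 * ((Kd \<bullet> Kd) / 2) \<le> \<eta>^2 * (Lf^2 * (Kx \<bullet> Kx) / 2)" .
  have "(\<alpha> - \<beta>)^2 * (Lx \<bullet> Lx) \<le> (\<alpha> - \<beta>)^2 * ((rho (lap W))^2 * (Kx \<bullet> Kx))"
    using kmult_lap_inner_le_rho[of x] by (intro mult_left_mono) (simp_all add: Lx_def)
  then have "(\<alpha> - \<beta>) * (Lx \<bullet> Kd) \<le> (\<alpha> - \<beta>)^2 * (rho (lap W))^2 * (Kx \<bullet> Kx) / 2 + Lf^2 * (Kx \<bullet> Kx) / 2"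
    using inner_le_half_squares[of "(\<alpha> - \<beta>) *\<^sub>R Lx" Kd] Kd by (simp add: power2_eq_square)
  from mult_left_mono[OF this eta2]
  show "\<eta>^2 * ((\<alpha> - \<beta>) * (Lx \<bullet> Kd))
      \<le> \<eta>^2 * ((\<alpha> - \<beta>)^2 * (rho (lap W))^2 * (Kx \<bullet> Kx) / 2 + Lf^2 * (Kx \<bullet> Kx) / 2)" .
  have "\<beta> * (Ku \<bullet> Kd) \<le> \<beta>^2 * (Ku \<bullet> Ku) / 2 + Lf^2 * (Kx \<bullet> Kx) / 2"
    using inner_le_half_squares[of "\<beta> *\<^sub>R Ku" Kd] Kd by (simp add: power2_eq_square)
  from mult_left_mono[OF this eta2]
  show "\<eta>^2 * (\<beta> * (Ku \<bullet> Kd)) \<le> \<eta>^2 * (\<beta>^2 * (Ku \<bullet> Ku) / 2 + Lf^2 * (Kx \<bullet> Kx) / 2)" .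
qed

lemma norm_Kg_le: "norm Kg \<le> norm gstep"
  using kmult_Kmat_inner_le[of gstep] by (simp add: norm_le)

lemma rho2_norm_Qg_le: "rho2 (lap W) * norm Qg \<le> norm gstep"
  using rho2_norm_kmult_pinv_le[of gstep] norm_Kg_le by linarith

lemma inner_le_of_norm_le_gstep:
  assumes "norm z \<le> norm gstep" and "0 < t"
  shows "y \<bullet> z \<le> (t * (y \<bullet> y) + Lf^2 * \<eta>^2 * (Hg \<bullet> Hg) / t) / 2"
proof -
  have "y \<bullet> z \<le> norm y * norm gstep"
    using norm_cauchy_schwarz[of y z] assms(1) by (meson mult_left_mono norm_ge_zero order_trans)
  also have "\<dots> \<le> (t * (norm y)^2 + (norm gstep)^2 / t) / 2"
    by (rule mult_le_weighted_squares[OF assms(2)])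
  also have "(norm gstep)^2 / t \<le> Lf^2 * \<eta>^2 * (Hg \<bullet> Hg) / t"
    using gstep_inner_le assms(2) by (simp add: power2_norm_eq_inner divide_right_mono)
  finally show ?thesis
    by (simp add: power2_norm_eq_inner)
qed

lemma gradient_step_first_order_terms_le:
  shows "(Ku \<bullet> Qg) / \<beta> \<le> \<eta> * (Ku \<bullet> Ku) / (2 * \<beta> * rho2 (lap W)) + \<eta> * Lf^2 * (Hg \<bullet> Hg) / (2 * \<beta> * rho2 (lap W))"
    and "\<alpha> / \<beta>^2 * (Ku \<bullet> gstep) \<le> \<eta> * \<alpha> * (Ku \<bullet> Ku) / (2 * \<beta>^2) + \<eta> * \<alpha> * Lf^2 * (Hg \<bullet> Hg) / (2 * \<beta>^2)"
    and "(Kx \<bullet> gstep) / \<beta> \<le> \<eta> * (Kx \<bullet> Kx) / 2 + \<eta> * Lf^2 * (Hg \<bullet> Hg) / (2 * \<beta>^2)"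
proof -
  have rho2: "0 < rho2 (lap W)" by (rule rho2_pos)
  have Ku: "Ku \<bullet> z \<le> (\<eta> * (Ku \<bullet> Ku) + Lf^2 * \<eta> * (Hg \<bullet> Hg)) / 2" if "norm z \<le> norm gstep" for z
    using inner_le_of_norm_le_gstep[OF that eta_pos, of Ku] eta_pos by (simp add: power2_eq_square algebra_simps)
  have "rho2 (lap W) * (Ku \<bullet> Qg) = Ku \<bullet> (rho2 (lap W) *\<^sub>R Qg)"
    by simp
  also have "\<dots> \<le> (\<eta> * (Ku \<bullet> Ku) + Lf^2 * \<eta> * (Hg \<bullet> Hg)) / 2"
    using rho2_norm_Qg_le rho2 by (intro Ku) simp
  finally have "Ku \<bullet> Qg \<le> (\<eta> * (Ku \<bullet> Ku) + Lf^2 * \<eta> * (Hg \<bullet> Hg)) / 2 / rho2 (lap W)"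
    using rho2 by (simp add: pos_le_divide_eq mult.commute)
  then have "(Ku \<bullet> Qg) / \<beta> \<le> (\<eta> * (Ku \<bullet> Ku) + Lf^2 * \<eta> * (Hg \<bullet> Hg)) / 2 / rho2 (lap W) / \<beta>"
    by (rule divide_right_mono) (use beta_pos in simp)
  also have "\<dots> = \<eta> * (Ku \<bullet> Ku) / (2 * \<beta> * rho2 (lap W)) + \<eta> * Lf^2 * (Hg \<bullet> Hg) / (2 * \<beta> * rho2 (lap W))"
    using beta_pos rho2 by (simp add: field_simps)
  finally show "(Ku \<bullet> Qg) / \<beta> \<le> \<eta> * (Ku \<bullet> Ku) / (2 * \<beta> * rho2 (lap W))
      + \<eta> * Lf^2 * (Hg \<bullet> Hg) / (2 * \<beta> * rho2 (lap W))" .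
  have "\<alpha> / \<beta>^2 * (Ku \<bullet> gstep) \<le> \<alpha> / \<beta>^2 * ((\<eta> * (Ku \<bullet> Ku) + Lf^2 * \<eta> * (Hg \<bullet> Hg)) / 2)"
    using Ku[of gstep] beta_lt_alpha beta_pos by (intro mult_left_mono) auto
  also have "\<dots> = \<eta> * \<alpha> * (Ku \<bullet> Ku) / (2 * \<beta>^2) + \<eta> * \<alpha> * Lf^2 * (Hg \<bullet> Hg) / (2 * \<beta>^2)"
    using beta_pos by (simp add: field_simps)
  finally show "\<alpha> / \<beta>^2 * (Ku \<bullet> gstep) \<le> \<eta> * \<alpha> * (Ku \<bullet> Ku) / (2 * \<beta>^2)
      + \<eta> * \<alpha> * Lf^2 * (Hg \<bullet> Hg) / (2 * \<beta>^2)" .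
  have "0 < \<eta> * \<beta>" using eta_pos beta_pos by simp
  then have "(Kx \<bullet> gstep) / \<beta> \<le> ((\<eta> * \<beta>) * (Kx \<bullet> Kx) + Lf^2 * \<eta>^2 * (Hg \<bullet> Hg) / (\<eta> * \<beta>)) / 2 / \<beta>"
    by (intro divide_right_mono inner_le_of_norm_le_gstep) (use beta_pos in simp_all)
  also have "\<dots> = \<eta> * (Kx \<bullet> Kx) / 2 + \<eta> * Lf^2 * (Hg \<bullet> Hg) / (2 * \<beta>^2)"
    using eta_pos beta_pos by (simp add: field_simps power2_eq_square)
  finally show "(Kx \<bullet> gstep) / \<beta> \<le> \<eta> * (Kx \<bullet> Kx) / 2 + \<eta> * Lf^2 * (Hg \<bullet> Hg) / (2 * \<beta>^2)" .
qed

lemma gradient_step_second_order_terms_le: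
  shows "- \<eta> * (Ku \<bullet> gstep) \<le> \<eta>^2 * ((Ku \<bullet> Ku) / 2 + Lf^2 * (Hg \<bullet> Hg) / 2)"
    and "- \<eta> / \<beta> * (Kd \<bullet> gstep) \<le> \<eta>^2 * (Lf^2 * (Kx \<bullet> Kx) / 2 + Lf^2 * (Hg \<bullet> Hg) / (2 * \<beta>^2))"
    and "\<eta> * (Kx \<bullet> gstep) \<le> \<eta>^2 * (\<beta>^2 * rho (lap W) * (Kx \<bullet> Kx) / 2 + Lf^2 * (Hg \<bullet> Hg) / (2 * \<beta>^2 * rho2 (lap W)))"
proof -
  have rho2: "0 < rho2 (lap W)" by (rule rho2_pos)
  have eta: "0 \<le> \<eta>" using eta_pos by simp
  have "- (Ku \<bullet> gstep) \<le> (\<eta> * (Ku \<bullet> Ku) + Lf^2 * \<eta>^2 * (Hg \<bullet> Hg) / \<eta>) / 2"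
    using inner_le_of_norm_le_gstep[OF _ eta_pos, of "- gstep" Ku] by simp
  then have "\<eta> * (- (Ku \<bullet> gstep)) \<le> \<eta> * ((\<eta> * (Ku \<bullet> Ku) + Lf^2 * \<eta>^2 * (Hg \<bullet> Hg) / \<eta>) / 2)"
    using eta by (rule mult_left_mono)
  then show "- \<eta> * (Ku \<bullet> gstep) \<le> \<eta>^2 * ((Ku \<bullet> Ku) / 2 + Lf^2 * (Hg \<bullet> Hg) / 2)"
    using eta_pos by (simp add: power2_eq_square field_simps)
  have "0 < \<eta> * \<beta>" using eta_pos beta_pos by simp
  then have "- (Kd \<bullet> gstep) \<le> ((\<eta> * \<beta>) * (Kd \<bullet> Kd) + Lf^2 * \<eta>^2 * (Hg \<bullet> Hg) / (\<eta> * \<beta>)) / 2"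
    using inner_le_of_norm_le_gstep[of "- gstep" "\<eta> * \<beta>" Kd] by simp
  also have "\<dots> \<le> ((\<eta> * \<beta>) * (Lf^2 * (Kx \<bullet> Kx)) + Lf^2 * \<eta>^2 * (Hg \<bullet> Hg) / (\<eta> * \<beta>)) / 2"
    using kmult_Kmat_inner_le[of gerr] gerr_inner_le \<open>0 < \<eta> * \<beta>\<close> by (simp add: mult_left_mono)
  finally have "\<eta> / \<beta> * (- (Kd \<bullet> gstep))
      \<le> \<eta> / \<beta> * (((\<eta> * \<beta>) * (Lf^2 * (Kx \<bullet> Kx)) + Lf^2 * \<eta>^2 * (Hg \<bullet> Hg) / (\<eta> * \<beta>)) / 2)"
    using eta_pos beta_pos by (intro mult_left_mono) auto
  also have "\<dots> = \<eta>^2 * (Lf^2 * (Kx \<bullet> Kx) / 2 + Lf^2 * (Hg \<bullet> Hg) / (2 * \<beta>^2))"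
    using eta_pos beta_pos by (simp add: field_simps power2_eq_square)
  finally show "- \<eta> / \<beta> * (Kd \<bullet> gstep) \<le> \<eta>^2 * (Lf^2 * (Kx \<bullet> Kx) / 2 + Lf^2 * (Hg \<bullet> Hg) / (2 * \<beta>^2))"
    by simp
  have t: "0 < \<eta> * \<beta>^2 * rho2 (lap W)" using eta_pos beta_pos rho2 by simp
  have "Kx \<bullet> gstep \<le> ((\<eta> * \<beta>^2 * rho2 (lap W)) * (Kx \<bullet> Kx)
      + Lf^2 * \<eta>^2 * (Hg \<bullet> Hg) / (\<eta> * \<beta>^2 * rho2 (lap W))) / 2"
    using inner_le_of_norm_le_gstep[OF _ t, of gstep Kx] by simp
  also have "\<dots> \<le> ((\<eta> * \<beta>^2 * rho (lap W)) * (Kx \<bullet> Kx)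
      + Lf^2 * \<eta>^2 * (Hg \<bullet> Hg) / (\<eta> * \<beta>^2 * rho2 (lap W))) / 2"
    using rho2_le_rho eta by (simp add: mult_right_mono mult_left_mono)
  finally have "\<eta> * (Kx \<bullet> gstep) \<le> \<eta> * (((\<eta> * \<beta>^2 * rho (lap W)) * (Kx \<bullet> Kx)
      + Lf^2 * \<eta>^2 * (Hg \<bullet> Hg) / (\<eta> * \<beta>^2 * rho2 (lap W))) / 2)"
    using eta by (rule mult_left_mono)
  also have "\<dots> = \<eta>^2 * (\<beta>^2 * rho (lap W) * (Kx \<bullet> Kx) / 2 + Lf^2 * (Hg \<bullet> Hg) / (2 * \<beta>^2 * rho2 (lap W)))"
    using eta_pos beta_pos rho2 by (simp add: field_simps power2_eq_square)
  finally show "\<eta> * (Kx \<bullet> gstep) \<le> \<eta>^2 * (\<beta>^2 * rho (lap W) * (Kx \<bullet> Kx) / 2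
      + Lf^2 * (Hg \<bullet> Hg) / (2 * \<beta>^2 * rho2 (lap W)))" .
qed

lemma gradient_step_square_terms_le:
  "(gstep \<bullet> Qg) / (2 * \<beta>^2) + \<alpha> / (2 * \<beta>^3) * (Kg \<bullet> Kg)
      \<le> \<eta>^2 * (1 / rho2 (lap W) + \<alpha> / \<beta>) * Lf^2 * (Hg \<bullet> Hg) / (2 * \<beta>^2)"
proof -
  have rho2: "0 < rho2 (lap W)" by (rule rho2_pos)
  have gstep: "gstep \<bullet> gstep \<le> Lf^2 * \<eta>^2 * (Hg \<bullet> Hg)" by (rule gstep_inner_le)
  have "rho2 (lap W) * (gstep \<bullet> Qg) \<le> norm gstep * (rho2 (lap W) * norm Qg)"
    using norm_cauchy_schwarz[of gstep Qg] rho2 by (simp add: mult_left_mono mult.left_commute)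
  also have "\<dots> \<le> norm gstep * norm gstep"
    using rho2_norm_Qg_le by (simp add: mult_left_mono)
  also have "\<dots> = gstep \<bullet> gstep"
    by (metis power2_eq_square power2_norm_eq_inner)
  finally have "gstep \<bullet> Qg \<le> Lf^2 * \<eta>^2 * (Hg \<bullet> Hg) / rho2 (lap W)"
    using gstep rho2 by (simp add: pos_le_divide_eq mult.commute)
  moreover have "Kg \<bullet> Kg \<le> Lf^2 * \<eta>^2 * (Hg \<bullet> Hg)"
    using kmult_Kmat_inner_le[of gstep] gstep by linarith
  ultimately have "(gstep \<bullet> Qg) / (2 * \<beta>^2) + \<alpha> / (2 * \<beta>^3) * (Kg \<bullet> Kg)
      \<le> (Lf^2 * \<eta>^2 * (Hg \<bullet> Hg) / rho2 (lap W)) / (2 * \<beta>^2) + \<alpha> / (2 * \<beta>^3) * (Lf^2 * \<eta>^2 * (Hg \<bullet> Hg))"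
    using beta_pos beta_lt_alpha by (intro add_mono divide_right_mono mult_left_mono) auto
  also have "\<dots> = \<eta>^2 * (1 / rho2 (lap W) + \<alpha> / \<beta>) * Lf^2 * (Hg \<bullet> Hg) / (2 * \<beta>^2)"
    using beta_pos rho2 by (simp add: field_simps power2_eq_square power3_eq_cube)
  finally show ?thesis .
qed

text \<open>The descent lemma for the average objective along the mean step; the cross term is
  rewritten with the polarization identity for Hg - Hg0 = Hd.\<close>

lemma objective_increment_le:
  "real CARD('n) * (avgf f (xbar x_next) - avgf f (xbar x))
     \<le> - \<eta> * (Hg \<bullet> Hg + Hg0 \<bullet> Hg0) / 2 + \<eta> * (Hd \<bullet> Hd) / 2 + Lf / 2 * \<eta>^2 * (Hg \<bullet> Hg)"
proof -
  define gm gm0 where "gm = xbar (gcol grad x)" and "gm0 = xbar (g0col grad x)"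
  define h where "h = - \<eta> *\<^sub>R gm"
  have "real CARD('n) * (avgf f (xbar x_next) - avgf f (xbar x))
      = (\<Sum>i\<in>UNIV. f i (xbar x + h)) - (\<Sum>i\<in>UNIV. f i (xbar x))"
    by (simp add: avgf_def h_def gm_def xbar_x_next right_diff_distrib)
  also have "\<dots> \<le> (\<Sum>i\<in>UNIV. grad i (xbar x) \<bullet> h + Lf/2 * (norm h)^2)"
    using descent_lemma[OF has_grad grad_lipschitz, of _ "xbar x" h]
    by (simp add: sum_mono sum.distrib[symmetric] sum_subtractf[symmetric] algebra_simps)
  also have "\<dots> = real CARD('n) * (gm0 \<bullet> h) + real CARD('n) * (Lf/2 * (norm h)^2)"
    by (simp add: sum.distrib inner_sum_left[symmetric] gm0_def xbar_def g0col_def)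
  also have "\<dots> = - \<eta> * (real CARD('n) * (gm \<bullet> gm0)) + Lf/2 * \<eta>^2 * (Hg \<bullet> Hg)"
    using inner_kmult_Hmat[of "gcol grad x" "gcol grad x"]
    by (simp add: h_def gm_def power_mult_distrib power2_norm_eq_inner inner_commute algebra_simps)
  also have "real CARD('n) * (gm \<bullet> gm0) = (Hg \<bullet> Hg + Hg0 \<bullet> Hg0 - Hd \<bullet> Hd) / 2"
    by (simp add: gm_def gm0_def gerr_def kmult_diff inner_kmult_Hmat inner_diff_left inner_diff_right
        inner_commute algebra_simps)
  finally show ?thesis
    by (simp add: field_simps)
qed

text \<open>The term-by-term bounds add up to coefficients that the paper's constants dominate;
  the difference is the nonnegative slack.\<close>

lemma lyapV_step_le:
  "lyapV (lap W) f grad \<alpha> \<beta> x_next v_next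
     \<le> lyapV (lap W) f grad \<alpha> \<beta> x v
       - \<eta> * (eps1 (lap W) \<alpha> \<beta> Lf - \<eta> * eps2 (lap W) \<alpha> \<beta> Lf) * wnorm2 Kmat x
       - \<eta> * (eps3 (lap W) \<alpha> \<beta> - \<eta> * eps4 \<beta>) * wnorm2 Kmat (v + (1/\<beta>) *\<^sub>R g0col grad x)
       - \<eta> * (eps5 (lap W) \<alpha> \<beta> Lf - \<eta> * eps6 (lap W) \<alpha> \<beta> Lf) * (norm Hg)^2
       - \<eta> / 4 * (norm Hg0)^2"
proof -
  define a b G G0 \<rho> \<rho>2 where "a = Kx \<bullet> Kx" and "b = Ku \<bullet> Ku" and "G = Hg \<bullet> Hg"
    and "G0 = Hg0 \<bullet> Hg0" and "\<rho> = rho (lap W)" and "\<rho>2 = rho2 (lap W)"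
  define slack where "slack = \<eta>^2*\<rho>^2*(\<alpha>^2/2 + 5/2*\<alpha>*\<beta>)*a + \<eta>^2*Lf^2*a/2 + \<eta>^2*\<beta>^2*b/2
    + \<eta>^2*Lf^2*(1 + \<alpha>/\<beta>)/(2*\<beta>^2)*G + \<eta>/4*G + \<eta>/4*G0"
  have "0 \<le> slack"
    unfolding slack_def using beta_lt_alpha beta_pos eta_pos
    by (intro add_nonneg_nonneg mult_nonneg_nonneg divide_nonneg_pos) (auto simp: a_def b_def G_def G0_def)
  have "0 < \<rho>2" using rho2_pos by (simp add: \<rho>2_def)
  have "lyapV (lap W) f grad \<alpha> \<beta> x_next v_next \<le> lyapV (lap W) f grad \<alpha> \<beta> x v + (- \<eta>*(\<alpha>-\<beta>)*\<rho>2*a + \<eta>*(a/2 + Lf^2*a/2) + \<eta>*(b/2 + Lf^2*a/2) - \<eta>*\<beta>*b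
      + (\<eta>*b/(2*\<beta>*\<rho>2) + \<eta>*Lf^2*G/(2*\<beta>*\<rho>2)) + (\<eta>*\<alpha>*b/(2*\<beta>^2) + \<eta>*\<alpha>*Lf^2*G/(2*\<beta>^2))
      + (\<eta>*a/2 + \<eta>*Lf^2*G/(2*\<beta>^2)) + \<eta>^2*((\<alpha>^2/2-\<alpha>*\<beta>/2)*\<rho>^2*a) + \<eta>^2*(\<beta>^2/2*b)
      + \<eta>^2*(Lf^2*a/2) + \<eta>^2*((\<alpha>-\<beta>)^2*\<rho>^2*a/2 + \<beta>^2*b/2) + \<eta>^2*((\<alpha>-\<beta>)^2*\<rho>^2*a/2 + Lf^2*a/2)
      + \<eta>^2*(\<beta>^2*b/2 + Lf^2*a/2) + \<eta>^2*(\<beta>^2*\<rho>*a/2) + \<eta>^2*(\<beta>^2*\<rho>*a/2 + Lf^2*G/(2*\<beta>^2*\<rho>2))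
      + \<eta>^2*(b/2 + Lf^2*G/2) + \<eta>^2*(Lf^2*a/2 + Lf^2*G/(2*\<beta>^2)) + \<eta>^2*(1/\<rho>2 + \<alpha>/\<beta>)*Lf^2*G/(2*\<beta>^2)
      + (-\<eta>*(G+G0)/2 + \<eta>*Lf^2*a/2 + Lf/2*\<eta>^2*G))" (is "_ \<le> ?bound")
    using lyapV_increment_expanded laplacian_terms_le disagreement_terms_le
      gradient_step_first_order_terms_le gradient_step_second_order_terms_le
      gradient_step_square_terms_le objective_increment_le
    unfolding a_def b_def G_def G0_def \<rho>_def \<rho>2_def by linarith
  moreover have "?bound = lyapV (lap W) f grad \<alpha> \<beta> x v
       - \<eta> * (eps1 (lap W) \<alpha> \<beta> Lf - \<eta> * eps2 (lap W) \<alpha> \<beta> Lf) * a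
       - \<eta> * (eps3 (lap W) \<alpha> \<beta> - \<eta> * eps4 \<beta>) * b
       - \<eta> * (eps5 (lap W) \<alpha> \<beta> Lf - \<eta> * eps6 (lap W) \<alpha> \<beta> Lf) * G - \<eta> / 4 * G0 - slack"
    using beta_pos \<open>0 < \<rho>2\<close>
    by (simp add: slack_def eps1_def eps2_def eps3_def eps4_def eps5_def eps6_def \<rho>_def[symmetric]
        \<rho>2_def[symmetric] field_simps power2_eq_square power3_eq_cube)
  moreover have "wnorm2 Kmat x = a" "wnorm2 Kmat (v + (1/\<beta>) *\<^sub>R g0col grad x) = b"
    "(norm Hg)^2 = G" "(norm Hg0)^2 = G0"
    by (simp_all add: a_def b_def G_def G0_def u_def wnorm2_def kinner_def inner_kmult_Kmat_self
        power2_norm_eq_inner)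
  ultimately show ?thesis
    using \<open>0 \<le> slack\<close> by simp
qed

end

theorem lemma6:
  fixes W :: "real^'n^'n"
    and f :: "'n \<Rightarrow> real^'p \<Rightarrow> real"
    and grad :: "'n \<Rightarrow> real^'p \<Rightarrow> real^'p"
    and Lf \<alpha> \<beta> \<eta> :: real
    and x v :: "nat \<Rightarrow> (real^'p)^'n"
  assumes n2: "CARD('n) \<ge> 2"
    and wg: "weighted_graph W"
    and A1: "graph_connected W"
    and A2: "\<exists>xs. \<forall>y. avgf f xs \<le> avgf f y"
    and grad: "\<And>i y. (f i has_derivative (\<lambda>h. grad i y \<bullet> h)) (at y)"
    and A3: "\<And>i y z. norm (grad i y - grad i z) \<le> Lf * norm (y - z)"
    and ab: "\<alpha> > \<beta>" and b0: "\<beta> > 0" and eta0: "\<eta> > 0"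
    and v0: "(\<Sum>j\<in>UNIV. v 0 $ j) = 0"
    and xrec: "\<And>k i. x (Suc k) $ i = x k $ i - \<eta> *\<^sub>R
                 (\<alpha> *\<^sub>R (\<Sum>j\<in>UNIV. lap W $ i $ j *\<^sub>R x k $ j) + \<beta> *\<^sub>R v k $ i + grad i (x k $ i))"
    and vrec: "\<And>k i. v (Suc k) $ i = v k $ i + (\<eta> * \<beta>) *\<^sub>R (\<Sum>j\<in>UNIV. lap W $ i $ j *\<^sub>R x k $ j)"
  shows "\<forall>k. lyapV (lap W) f grad \<alpha> \<beta> (x (Suc k)) (v (Suc k))
           \<le> lyapV (lap W) f grad \<alpha> \<beta> (x k) (v k)
             - \<eta> * (eps1 (lap W) \<alpha> \<beta> Lf - \<eta> * eps2 (lap W) \<alpha> \<beta> Lf) * wnorm2 Kmat (x k)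
             - \<eta> * (eps3 (lap W) \<alpha> \<beta> - \<eta> * eps4 \<beta>)
                   * wnorm2 Kmat (v k + (1/\<beta>) *\<^sub>R g0col grad (x k))
             - \<eta> * (eps5 (lap W) \<alpha> \<beta> Lf - \<eta> * eps6 (lap W) \<alpha> \<beta> Lf)
                   * (norm (kmult Hmat (gcol grad (x k))))^2
             - \<eta> / 4 * (norm (kmult Hmat (g0col grad (x k))))^2"
proof -
  interpret connected_graph W
    using n2 wg A1 by unfold_locales
  have x_Suc: "x (Suc k) = x k - \<eta> *\<^sub>R (\<alpha> *\<^sub>R kmult (lap W) (x k) + \<beta> *\<^sub>R v k + gcol grad (x k))" for k
    by (simp add: vec_eq_iff xrec kmult_nth gcol_def)
  have v_Suc: "v (Suc k) = v k + (\<eta> * \<beta>) *\<^sub>R kmult (lap W) (x k)" for k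
    by (simp add: vec_eq_iff vrec kmult_nth)
  have mean_v: "kmult Hmat (v k) = 0" for k
  proof (induction k)
    case 0
    then show ?case using v0 by (simp add: vec_eq_iff kmult_Hmat_nth xbar_def)
  next
    case (Suc k)
    then show ?case by (simp add: v_Suc kmult_add kmult_scaleR kmult_kmult)
  qed
  show ?thesis (is "\<forall>k. ?descent k")
  proof
    fix k
    interpret step: dgd_step W f grad Lf \<alpha> \<beta> \<eta> "x k" "v k"
      using grad A3 ab b0 eta0 mean_v by unfold_locales auto
    show "?descent k"
      using step.lyapV_step_le by (simp add: step.x_next_def step.v_next_def x_Suc v_Suc)
  qed
qed

end
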